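(* Let $n\ge3$, $B$ the closed unit disc, and let $X\in C^3(B,\mathbb R^n)$ be a conformally parametrized ($X_u\cdot X_u=W=X_v\cdot X_v$, $X_u\cdot X_v=0$) minimal immersion with flat normal bundle, i.e. there is a $C^2$ orthonormal normal section $\{N_1,\dots,N_{n-2}\}$ whose torsion coefficients all vanish. Assume $X$ is stable: for every $C^2$ unit normal field $N$ along $X$ and every $\varphi\in C_0^\infty(B,\mathbb R)$, $\frac{d^2}{d\varepsilon^2}\mathcal A[X+\varepsilon\varphi N]\big|_{\varepsilon=0}\ge0$, where $\mathcal A[Y]=\iint_B\sqrt{\det(Y_{u^i}\cdot Y_{u^j})}\,dudv$. Let $K$ be the Gaussian curvature of $X$. Then for every $\mu$ with $0<\mu\le\frac{2}{n-2}$, $$\iint_B|\nabla\varphi|^2\,dudv\ge\mu\iint_B(-K)W\varphi^2\,dudv\quad\text{for all }\varphi\in C_0^\infty(B,\mathbb R).$$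
   Context: Orthonormal normal section: $N_\sigma\in C^2(B,\mathbb R^n)$ with $X_{u^i}\cdot N_\sigma=0$, $N_\sigma\cdot N_\omega=\delta_{\sigma\omega}$; torsion coefficients $T^\omega_{\sigma,i}=N_{\sigma,u^i}\cdot N_\omega$ ($\sigma\ne\omega$). With $L_{\sigma,ij}=X_{u^iu^j}\cdot N_\sigma$: minimal means $L_{\sigma,11}+L_{\sigma,22}=0$ for all $\sigma$; $K:=\sum_\sigma(L_{\sigma,11}L_{\sigma,22}-L_{\sigma,12}^2)/W^2$ (independent of the section), and $K\le0$ for minimal $X$. *)

theory Defs
  imports "HOL-Analysis.Analysis"
begin

text \<open>Parameter domain: points of the plane are vectors in real^2, with
  coordinates u^1 = p$1, u^2 = p$2. The closed unit disc is cball 0 1.\<close>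

definition Bdisc :: "(real^2) set" where
  "Bdisc = cball 0 1"

definition pd :: "(real^2 \<Rightarrow> 'a::real_normed_vector) \<Rightarrow> 2 \<Rightarrow> real^2 \<Rightarrow> 'a" where
  "pd f i p = vector_derivative (\<lambda>t. f (p + t *\<^sub>R axis i 1)) (at 0)"

text \<open>Partial derivative on the closed set S, extended to the boundary by continuity
  (limit of interior values).\<close>
definition pdB :: "(real^2) set \<Rightarrow> (real^2 \<Rightarrow> 'a::real_normed_vector) \<Rightarrow> 2 \<Rightarrow> real^2 \<Rightarrow> 'a" where
  "pdB S f i p = Lim (at p within interior S) (pd f i)"

fun Ck :: "nat \<Rightarrow> (real^2) set \<Rightarrow> (real^2 \<Rightarrow> 'a::real_normed_vector) \<Rightarrow> bool" where
  "Ck 0 S f = continuous_on S f"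
| "Ck (Suc k) S f = (continuous_on S f \<and>
     (\<exists>g :: 2 \<Rightarrow> real^2 \<Rightarrow> 'a. (\<forall>i. Ck k S (g i)) \<and>
        (\<forall>p\<in>interior S. \<forall>i. ((\<lambda>t. f (p + t *\<^sub>R axis i 1)) has_vector_derivative g i p) (at 0))))"

definition C0inf :: "(real^2 \<Rightarrow> real) \<Rightarrow> bool" where
  "C0inf \<phi> \<longleftrightarrow> (\<forall>k. Ck k UNIV \<phi>) \<and> compact (closure {p. \<phi> p \<noteq> 0})
      \<and> closure {p. \<phi> p \<noteq> 0} \<subseteq> ball 0 1"

definition gradsq :: "(real^2 \<Rightarrow> real) \<Rightarrow> real^2 \<Rightarrow> real" where
  "gradsq \<phi> p = (pd \<phi> 1 p)\<^sup>2 + (pd \<phi> 2 p)\<^sup>2"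

definition area :: "(real^2 \<Rightarrow> real^'n) \<Rightarrow> real" where
  "area Y = integral Bdisc (\<lambda>p. sqrt ((pd Y 1 p \<bullet> pd Y 1 p) * (pd Y 2 p \<bullet> pd Y 2 p)
                                       - (pd Y 1 p \<bullet> pd Y 2 p)\<^sup>2))"

text \<open>W = X_u . X_u (area element of a conformal parametrization).\<close>
definition Wf :: "(real^2 \<Rightarrow> real^'n) \<Rightarrow> real^2 \<Rightarrow> real" where
  "Wf X p = pd X 1 p \<bullet> pd X 1 p"

definition conformal_immersion :: "(real^2 \<Rightarrow> real^'n) \<Rightarrow> bool" where
  "conformal_immersion X \<longleftrightarrow> (\<forall>p\<in>Bdisc.
      pdB Bdisc X 1 p \<bullet> pdB Bdisc X 1 p = pdB Bdisc X 2 p \<bullet> pdB Bdisc X 2 p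
    \<and> pdB Bdisc X 1 p \<bullet> pdB Bdisc X 2 p = 0
    \<and> pdB Bdisc X 1 p \<bullet> pdB Bdisc X 1 p > 0)"

text \<open>Orthonormal normal section N_0, ..., N_{n-3} (indices shifted to start at 0)
  of class C^2 on B.\<close>
definition ON_normal_section :: "(real^2 \<Rightarrow> real^'n) \<Rightarrow> (nat \<Rightarrow> real^2 \<Rightarrow> real^'n) \<Rightarrow> bool" where
  "ON_normal_section X N \<longleftrightarrow> (\<forall>\<sigma> < CARD('n) - 2. Ck 2 Bdisc (N \<sigma>)) \<and>
     (\<forall>p\<in>Bdisc. (\<forall>\<sigma> < CARD('n) - 2. \<forall>i. pdB Bdisc X i p \<bullet> N \<sigma> p = 0) \<and>
        (\<forall>\<sigma> < CARD('n) - 2. \<forall>\<omega> < CARD('n) - 2.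
            N \<sigma> p \<bullet> N \<omega> p = (if \<sigma> = \<omega> then 1 else 0)))"

definition torsion :: "(nat \<Rightarrow> real^2 \<Rightarrow> real^'n) \<Rightarrow> nat \<Rightarrow> nat \<Rightarrow> 2 \<Rightarrow> real^2 \<Rightarrow> real" where
  "torsion N \<sigma> \<omega> i p = pdB Bdisc (N \<sigma>) i p \<bullet> N \<omega> p"

definition torsion_free :: "(nat \<Rightarrow> real^2 \<Rightarrow> real^'n) \<Rightarrow> bool" where
  "torsion_free N \<longleftrightarrow> (\<forall>p\<in>Bdisc. \<forall>\<sigma> < CARD('n) - 2. \<forall>\<omega> < CARD('n) - 2. \<forall>i.
      \<sigma> \<noteq> \<omega> \<longrightarrow> torsion N \<sigma> \<omega> i p = 0)"

definition Lcoef :: "(real^2 \<Rightarrow> real^'n) \<Rightarrow> (nat \<Rightarrow> real^2 \<Rightarrow> real^'n) \<Rightarrow> nat \<Rightarrow> 2 \<Rightarrow> 2 \<Rightarrow> real^2 \<Rightarrow> real" where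
  "Lcoef X N \<sigma> i j p = pd (pd X j) i p \<bullet> N \<sigma> p"

definition minimal_wrt :: "(real^2 \<Rightarrow> real^'n) \<Rightarrow> (nat \<Rightarrow> real^2 \<Rightarrow> real^'n) \<Rightarrow> bool" where
  "minimal_wrt X N \<longleftrightarrow> (\<forall>p\<in>ball 0 1. \<forall>\<sigma> < CARD('n) - 2.
      Lcoef X N \<sigma> 1 1 p + Lcoef X N \<sigma> 2 2 p = 0)"

definition gauss_curv :: "(real^2 \<Rightarrow> real^'n) \<Rightarrow> (nat \<Rightarrow> real^2 \<Rightarrow> real^'n) \<Rightarrow> real^2 \<Rightarrow> real" where
  "gauss_curv X N p = (\<Sum>\<sigma> < CARD('n) - 2.
      Lcoef X N \<sigma> 1 1 p * Lcoef X N \<sigma> 2 2 p - (Lcoef X N \<sigma> 1 2 p)\<^sup>2) / (Wf X p)\<^sup>2"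

definition stable :: "(real^2 \<Rightarrow> real^'n) \<Rightarrow> bool" where
  "stable X \<longleftrightarrow> (\<forall>(M :: real^2 \<Rightarrow> real^'n) \<phi>.
      Ck 2 Bdisc M \<and> (\<forall>p\<in>Bdisc. M p \<bullet> M p = 1 \<and> (\<forall>i. pdB Bdisc X i p \<bullet> M p = 0))
      \<and> C0inf \<phi> \<longrightarrow>
      deriv (deriv (\<lambda>\<epsilon>. area (\<lambda>p. X p + (\<epsilon> * \<phi> p) *\<^sub>R M p))) 0 \<ge> 0)"

end

theory Submission
  imports Defs
begin

text \<open>
  Fix a field N_\<sigma> of the flat normal frame and vary the surface by X + \<epsilon> \<phi> N_\<sigma>.
  Differentiating the area integrand twice under the integral sign (legitimate because \<phi> has
  compact support in the open disc, where the integrand is smooth and positive in \<epsilon>),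
  stability gives

    0 \<le> A''(0) = \<integral> |\<nabla>\<phi>|^2 + 2 \<phi>^2 (L_{\<sigma>,11} L_{\<sigma>,22} - L_{\<sigma>,12}^2) / W.

  Conformality makes the second derivative of the Gram determinant at \<epsilon> = 0 explicit, and
  flatness of the normal bundle makes the derivatives of N_\<sigma> tangential, so that
  |N_{\<sigma>,u^i}|^2 = (L_{\<sigma>,i1}^2 + L_{\<sigma>,i2}^2) / W. Summing over the n - 2 normal fields
  turns the curvature terms into 2 K W \<phi>^2, whence (n - 2) \<integral> |\<nabla>\<phi>|^2 \<ge> 2 \<integral> (-K) W \<phi>^2.
  Minimality gives K \<le> 0, so the inequality persists for every smaller \<mu> > 0.
\<close>

section \<open>Partial derivatives along coordinate lines\<close>

lemma Ck_imp_continuous_on: "Ck k S f \<Longrightarrow> continuous_on S f"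
  by (cases k) auto

lemma pd_eqI: "((\<lambda>t. f (p + t *\<^sub>R axis i 1)) has_vector_derivative d) (at 0) \<Longrightarrow> pd f i p = d"
  unfolding pd_def by (rule vector_derivative_at)

lemma open_line_preimage:
  fixes T :: "'a::real_normed_vector set"
  assumes "open T"
  shows "open {t::real. p + t *\<^sub>R a \<in> T}"
proof -
  have "continuous_on UNIV (\<lambda>t::real. p + t *\<^sub>R a)" by (intro continuous_intros)
  from open_vimage[OF assms this] show ?thesis by (simp add: vimage_def)
qed

lemma has_vector_derivative_line_transform:
  fixes p :: "'a::real_normed_vector"
  assumes "((\<lambda>t. f (p + t *\<^sub>R a)) has_vector_derivative d) (at 0)" "open T" "p \<in> T"
    and "\<And>q. q \<in> T \<Longrightarrow> f q = g q"
  shows "((\<lambda>t. g (p + t *\<^sub>R a)) has_vector_derivative d) (at 0)"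
  by (rule has_vector_derivative_transform_within_open[OF assms(1) open_line_preimage[OF assms(2)]])
    (use assms in auto)

lemma pd_cong_open:
  assumes "open T" "p \<in> T" "\<And>q. q \<in> T \<Longrightarrow> f q = g q"
  shows "pd f i p = pd g i p"
  unfolding pd_def
proof (rule vector_derivative_cong_eq)
  have "\<forall>\<^sub>F t in nhds 0. t \<in> {t. p + t *\<^sub>R axis i 1 \<in> T}"
    by (rule eventually_nhds_in_open[OF open_line_preimage[OF assms(1)]]) (use assms(2) in simp)
  then show "\<forall>\<^sub>F t in nhds 0. t \<in> UNIV \<longrightarrow> f (p + t *\<^sub>R axis i 1) = g (p + t *\<^sub>R axis i 1)"
    by (rule eventually_mono) (use assms(3) in simp)
qed auto

lemma inner_const_derivative_along_line:
  fixes f g :: "'a::real_normed_vector \<Rightarrow> 'b::real_inner"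
  assumes "((\<lambda>t. f (p + t *\<^sub>R a)) has_vector_derivative f') (at 0)"
    and "((\<lambda>t. g (p + t *\<^sub>R a)) has_vector_derivative g') (at 0)"
    and "open T" "p \<in> T" "\<And>q. q \<in> T \<Longrightarrow> f q \<bullet> g q = c"
  shows "f p \<bullet> g' + f' \<bullet> g p = 0"
proof -
  have "((\<lambda>t. f (p + t *\<^sub>R a) \<bullet> g (p + t *\<^sub>R a)) has_vector_derivative
      f (p + 0 *\<^sub>R a) \<bullet> g' + f' \<bullet> g (p + 0 *\<^sub>R a)) (at 0)"
    by (rule bounded_bilinear.has_vector_derivative[OF bounded_bilinear_inner assms(1,2)])
  then have deriv: "((\<lambda>t. f (p + t *\<^sub>R a) \<bullet> g (p + t *\<^sub>R a)) has_real_derivative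
      f p \<bullet> g' + f' \<bullet> g p) (at 0)"
    by (simp add: has_real_derivative_iff_has_vector_derivative)
  have "((\<lambda>t::real. c) has_real_derivative 0) (at 0)" by simp
  then have "((\<lambda>t. f (p + t *\<^sub>R a) \<bullet> g (p + t *\<^sub>R a)) has_real_derivative 0) (at 0)"
    by (rule has_field_derivative_transform_within_open[OF _ open_line_preimage[OF assms(3), of p a]])
      (use assms(4,5) in auto)
  with deriv show ?thesis by (rule DERIV_unique)
qed

lemma Ck_subset_open: "Ck k S f \<Longrightarrow> T \<subseteq> S \<Longrightarrow> open T \<Longrightarrow> Ck k T f"
proof (induction k arbitrary: f)
  case 0
  then show ?case using continuous_on_subset by auto
next
  case (Suc k)
  from Suc.prems(1) obtain g where g: "\<forall>i. Ck k S (g i)"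
    "\<forall>p\<in>interior S. \<forall>i. ((\<lambda>t. f (p + t *\<^sub>R axis i 1)) has_vector_derivative g i p) (at 0)"
    and "continuous_on S f" by auto
  moreover have "interior T \<subseteq> interior S" using Suc.prems(2) by (rule interior_mono)
  ultimately show ?case
    using Suc.IH[of "g _"] Suc.prems(2,3) continuous_on_subset[of S f T] by auto
qed

lemma Ck_cong_open:
  assumes "Ck k T f" "open T" "\<And>p. p \<in> T \<Longrightarrow> f p = g p"
  shows "Ck k T g"
proof (cases k)
  case 0
  then show ?thesis using assms continuous_on_cong by (metis Ck.simps(1))
next
  case (Suc k')
  from assms(1) Suc obtain f' where f': "\<forall>i. Ck k' T (f' i)"
    "\<forall>p\<in>interior T. \<forall>i. ((\<lambda>t. f (p + t *\<^sub>R axis i 1)) has_vector_derivative f' i p) (at 0)"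
    and "continuous_on T f" by auto
  then have "continuous_on T g" using assms(3) continuous_on_cong by metis
  moreover have "\<forall>p\<in>interior T. \<forall>i. ((\<lambda>t. g (p + t *\<^sub>R axis i 1)) has_vector_derivative f' i p) (at 0)"
    using f'(2) assms(2,3) by (auto simp: interior_open intro: has_vector_derivative_line_transform)
  ultimately show ?thesis using Suc f'(1) by auto
qed

lemma Ck_Suc_open_has_pd:
  assumes "open T" "Ck (Suc k) T f" "p \<in> T"
  shows "((\<lambda>t. f (p + t *\<^sub>R axis i 1)) has_vector_derivative pd f i p) (at 0)"
proof -
  obtain f' where "((\<lambda>t. f (p + t *\<^sub>R axis i 1)) has_vector_derivative f' i p) (at 0)"
    using assms by (auto simp: interior_open)
  then show ?thesis by (metis pd_eqI)
qed

lemma Ck_Suc_open_Ck_pd: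
  assumes "open T" "Ck (Suc k) T f"
  shows "Ck k T (pd f i)"
proof -
  obtain f' where f': "\<forall>i. Ck k T (f' i)"
    "\<forall>p\<in>T. \<forall>i. ((\<lambda>t. f (p + t *\<^sub>R axis i 1)) has_vector_derivative f' i p) (at 0)"
    using assms by (auto simp: interior_open)
  show ?thesis
  proof (rule Ck_cong_open[OF _ assms(1)])
    show "Ck k T (f' i)" using f'(1) by blast
    show "f' i p = pd f i p" if "p \<in> T" for p using f'(2) that pd_eqI by metis
  qed
qed

lemma pdB_eqI:
  assumes "p \<in> interior S" "continuous_on S g" "\<And>q. q \<in> interior S \<Longrightarrow> pd f i q = g q"
  shows "pdB S f i p = g p"
proof -
  have "(g \<longlongrightarrow> g p) (at p)"
    using continuous_on_interior[OF assms(2,1)] by (simp add: isCont_def)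
  moreover have "\<forall>\<^sub>F q in at p. pd f i q = g q"
    using eventually_at_in_open'[OF open_interior assms(1)] by (rule eventually_mono) (rule assms(3))
  ultimately have "(pd f i \<longlongrightarrow> g p) (at p)" by (simp add: tendsto_cong)
  then show ?thesis
    unfolding pdB_def at_within_open[OF assms(1) open_interior] by (intro tendsto_Lim) auto
qed

lemma pdB_eq_pd:
  assumes "Ck (Suc k) S f" "p \<in> interior S"
  shows "pdB S f i p = pd f i p"
proof -
  obtain f' where f': "\<forall>i. Ck k S (f' i)"
    "\<forall>p\<in>interior S. \<forall>i. ((\<lambda>t. f (p + t *\<^sub>R axis i 1)) has_vector_derivative f' i p) (at 0)"
    using assms(1) by auto
  then have pd_eq: "pd f i q = f' i q" if "q \<in> interior S" for q
    using that pd_eqI by blast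
  have "pdB S f i p = f' i p"
    by (rule pdB_eqI[OF assms(2) Ck_imp_continuous_on pd_eq]) (use f'(1) in blast)+
  then show ?thesis using pd_eq[OF assms(2)] by simp
qed

section \<open>Symmetry of mixed partial derivatives\<close>

lemma mvt_along_line:
  fixes g g' :: "'a::real_normed_vector \<Rightarrow> real"
  assumes "0 < h"
    and "\<And>s. 0 \<le> s \<Longrightarrow> s \<le> h \<Longrightarrow>
       ((\<lambda>t. g (q + s *\<^sub>R a + t *\<^sub>R a)) has_real_derivative g' (q + s *\<^sub>R a)) (at 0)"
  shows "\<exists>\<xi>. 0 < \<xi> \<and> \<xi> < h \<and> g (q + h *\<^sub>R a) - g q = h * g' (q + \<xi> *\<^sub>R a)"
proof -
  have "DERIV (\<lambda>s. g (q + s *\<^sub>R a)) s :> g' (q + s *\<^sub>R a)" if "0 \<le> s" "s \<le> h" for s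
  proof -
    have "((\<lambda>t. g (q + (t + s) *\<^sub>R a)) has_real_derivative g' (q + s *\<^sub>R a)) (at 0)"
      using assms(2)[OF that] by (simp add: algebra_simps scaleR_add_left)
    then show ?thesis using DERIV_shift[of "\<lambda>s. g (q + s *\<^sub>R a)" _ 0 s] by simp
  qed
  with MVT2[OF assms(1), of "\<lambda>s. g (q + s *\<^sub>R a)" "\<lambda>s. g' (q + s *\<^sub>R a)"]
  show ?thesis by auto
qed

lemma second_difference_mean_value:
  fixes f f1 f12 :: "'a::real_normed_vector \<Rightarrow> real"
  assumes h: "0 < h"
    and d1: "\<And>s u. 0 \<le> s \<Longrightarrow> s \<le> h \<Longrightarrow> 0 \<le> u \<Longrightarrow> u \<le> h \<Longrightarrow>
       ((\<lambda>t. f (p + s *\<^sub>R a + u *\<^sub>R b + t *\<^sub>R a)) has_real_derivative f1 (p + s *\<^sub>R a + u *\<^sub>R b)) (at 0)"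
    and d12: "\<And>s u. 0 \<le> s \<Longrightarrow> s \<le> h \<Longrightarrow> 0 \<le> u \<Longrightarrow> u \<le> h \<Longrightarrow>
       ((\<lambda>t. f1 (p + s *\<^sub>R a + u *\<^sub>R b + t *\<^sub>R b)) has_real_derivative f12 (p + s *\<^sub>R a + u *\<^sub>R b)) (at 0)"
  shows "\<exists>\<xi> \<eta>. 0 < \<xi> \<and> \<xi> < h \<and> 0 < \<eta> \<and> \<eta> < h \<and>
    f (p + h *\<^sub>R a + h *\<^sub>R b) - f (p + h *\<^sub>R a) - f (p + h *\<^sub>R b) + f p
      = h * h * f12 (p + \<xi> *\<^sub>R a + \<eta> *\<^sub>R b)"
proof -
  have "\<exists>\<xi>. 0 < \<xi> \<and> \<xi> < h \<and>
      (\<lambda>x. f (x + h *\<^sub>R b) - f x) (p + h *\<^sub>R a) - (\<lambda>x. f (x + h *\<^sub>R b) - f x) p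
        = h * (\<lambda>x. f1 (x + h *\<^sub>R b) - f1 x) (p + \<xi> *\<^sub>R a)"
  proof (rule mvt_along_line[OF h])
    fix s assume s: "0 \<le> s" "s \<le> h"
    have "((\<lambda>t. f (p + s *\<^sub>R a + h *\<^sub>R b + t *\<^sub>R a) - f (p + s *\<^sub>R a + 0 *\<^sub>R b + t *\<^sub>R a))
        has_real_derivative f1 (p + s *\<^sub>R a + h *\<^sub>R b) - f1 (p + s *\<^sub>R a + 0 *\<^sub>R b)) (at 0)"
      using s h by (intro derivative_intros d1) auto
    then show "((\<lambda>t. (\<lambda>x. f (x + h *\<^sub>R b) - f x) (p + s *\<^sub>R a + t *\<^sub>R a)) has_real_derivative
        (\<lambda>x. f1 (x + h *\<^sub>R b) - f1 x) (p + s *\<^sub>R a)) (at 0)"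
      by (simp add: algebra_simps)
  qed
  then obtain \<xi> where \<xi>: "0 < \<xi>" "\<xi> < h" and
    \<Delta>: "f (p + h *\<^sub>R a + h *\<^sub>R b) - f (p + h *\<^sub>R a) - f (p + h *\<^sub>R b) + f p
       = h * (f1 (p + \<xi> *\<^sub>R a + h *\<^sub>R b) - f1 (p + \<xi> *\<^sub>R a))"
    by (auto simp: algebra_simps)
  have "\<exists>\<eta>. 0 < \<eta> \<and> \<eta> < h \<and>
      f1 (p + \<xi> *\<^sub>R a + h *\<^sub>R b) - f1 (p + \<xi> *\<^sub>R a) = h * f12 (p + \<xi> *\<^sub>R a + \<eta> *\<^sub>R b)"
    by (rule mvt_along_line[OF h]) (use d12 \<xi> in auto)
  with \<xi> \<Delta> show ?thesis by auto
qed

lemma mixed_partials_agree_nearby: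
  fixes f f1 f2 f12 f21 :: "'a::real_normed_vector \<Rightarrow> real"
  assumes r: "r > 0" "ball p r \<subseteq> U"
    and d1: "\<And>q. q \<in> U \<Longrightarrow> ((\<lambda>t. f (q + t *\<^sub>R a)) has_real_derivative f1 q) (at 0)"
    and d2: "\<And>q. q \<in> U \<Longrightarrow> ((\<lambda>t. f (q + t *\<^sub>R b)) has_real_derivative f2 q) (at 0)"
    and d12: "\<And>q. q \<in> U \<Longrightarrow> ((\<lambda>t. f1 (q + t *\<^sub>R b)) has_real_derivative f12 q) (at 0)"
    and d21: "\<And>q. q \<in> U \<Longrightarrow> ((\<lambda>t. f2 (q + t *\<^sub>R a)) has_real_derivative f21 q) (at 0)"
  shows "\<exists>q q'. q \<in> ball p r \<and> q' \<in> ball p r \<and> f12 q = f21 q'"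
proof -
  define h where "h = r / (2 * (norm a + norm b + 1))"
  have h: "h > 0" using r(1) unfolding h_def by (simp add: add_nonneg_pos)
  have near: "p + s *\<^sub>R a + u *\<^sub>R b \<in> ball p r"
    if "0 \<le> s" "s \<le> h" "0 \<le> u" "u \<le> h" for s u
  proof -
    have "norm (s *\<^sub>R a + u *\<^sub>R b) \<le> h * (norm a + norm b + 1)"
      using norm_triangle_ineq[of "s *\<^sub>R a" "u *\<^sub>R b"] that
      by (simp add: distrib_left) (smt (verit) mult_right_mono norm_ge_zero)
    also have "\<dots> = r / 2"
      using add_nonneg_pos[of "norm a + norm b" 1] unfolding h_def by (simp add: field_simps)
    also have "\<dots> < r" using r(1) by simp
    finally show ?thesis by (simp add: dist_norm norm_minus_commute add.commute)
  qed
  then have inU: "p + s *\<^sub>R a + u *\<^sub>R b \<in> U" "p + u *\<^sub>R b + s *\<^sub>R a \<in> U"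
    if "0 \<le> s" "s \<le> h" "0 \<le> u" "u \<le> h" for s u
    using r(2) that by (auto simp: add_ac)
  obtain \<xi> \<eta> where \<xi>\<eta>: "0 < \<xi>" "\<xi> < h" "0 < \<eta>" "\<eta> < h"
    "f (p + h *\<^sub>R a + h *\<^sub>R b) - f (p + h *\<^sub>R a) - f (p + h *\<^sub>R b) + f p
       = h * h * f12 (p + \<xi> *\<^sub>R a + \<eta> *\<^sub>R b)"
    using second_difference_mean_value[OF h, of f p a b f1 f12] d1 d12 inU(1) by blast
  obtain \<xi>' \<eta>' where \<xi>\<eta>': "0 < \<xi>'" "\<xi>' < h" "0 < \<eta>'" "\<eta>' < h"
    "f (p + h *\<^sub>R b + h *\<^sub>R a) - f (p + h *\<^sub>R b) - f (p + h *\<^sub>R a) + f p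
       = h * h * f21 (p + \<xi>' *\<^sub>R b + \<eta>' *\<^sub>R a)"
    using second_difference_mean_value[OF h, of f p b a f2 f21] d2 d21 inU(2) by blast
  have swap: "p + h *\<^sub>R b + h *\<^sub>R a = p + h *\<^sub>R a + h *\<^sub>R b" by (simp add: add_ac)
  have "h * h * f12 (p + \<xi> *\<^sub>R a + \<eta> *\<^sub>R b) = h * h * f21 (p + \<xi>' *\<^sub>R b + \<eta>' *\<^sub>R a)"
    using \<xi>\<eta>(5) \<xi>\<eta>'(5)[unfolded swap] by linarith
  then have "f12 (p + \<xi> *\<^sub>R a + \<eta> *\<^sub>R b) = f21 (p + \<eta>' *\<^sub>R a + \<xi>' *\<^sub>R b)"
    using h by (simp add: add_ac)
  moreover have "p + \<xi> *\<^sub>R a + \<eta> *\<^sub>R b \<in> ball p r" "p + \<eta>' *\<^sub>R a + \<xi>' *\<^sub>R b \<in> ball p r"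
    using near \<xi>\<eta> \<xi>\<eta>' by auto
  ultimately show ?thesis by blast
qed

lemma mixed_partials_eq:
  fixes f f1 f2 f12 f21 :: "'a::real_normed_vector \<Rightarrow> real"
  assumes U: "open U" "p \<in> U"
    and d1: "\<And>q. q \<in> U \<Longrightarrow> ((\<lambda>t. f (q + t *\<^sub>R a)) has_real_derivative f1 q) (at 0)"
    and d2: "\<And>q. q \<in> U \<Longrightarrow> ((\<lambda>t. f (q + t *\<^sub>R b)) has_real_derivative f2 q) (at 0)"
    and d12: "\<And>q. q \<in> U \<Longrightarrow> ((\<lambda>t. f1 (q + t *\<^sub>R b)) has_real_derivative f12 q) (at 0)"
    and d21: "\<And>q. q \<in> U \<Longrightarrow> ((\<lambda>t. f2 (q + t *\<^sub>R a)) has_real_derivative f21 q) (at 0)"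
    and c12: "continuous_on U f12" and c21: "continuous_on U f21"
  shows "f12 p = f21 p"
proof (rule ccontr)
  assume "f12 p \<noteq> f21 p"
  define e where "e = \<bar>f12 p - f21 p\<bar> / 2"
  have "e > 0" using \<open>f12 p \<noteq> f21 p\<close> by (simp add: e_def)
  obtain r0 where r0: "r0 > 0" "ball p r0 \<subseteq> U" using U open_contains_ball by blast
  obtain r12 where r12: "r12 > 0" "\<And>q. q \<in> U \<Longrightarrow> dist q p < r12 \<Longrightarrow> dist (f12 q) (f12 p) < e"
    using c12 U(2) \<open>e > 0\<close> unfolding continuous_on_iff by metis
  obtain r21 where r21: "r21 > 0" "\<And>q. q \<in> U \<Longrightarrow> dist q p < r21 \<Longrightarrow> dist (f21 q) (f21 p) < e"
    using c21 U(2) \<open>e > 0\<close> unfolding continuous_on_iff by metis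
  define r where "r = min r0 (min r12 r21)"
  have r: "r > 0" "ball p r \<subseteq> U" using r0 r12 r21 by (auto simp: r_def)
  obtain q q' where q: "q \<in> ball p r" "q' \<in> ball p r" "f12 q = f21 q'"
    using mixed_partials_agree_nearby[OF r d1 d2 d12 d21] by blast
  have "dist q p < r12" "dist q' p < r21" "q \<in> U" "q' \<in> U"
    using q r(2) by (auto simp: r_def dist_commute)
  then have "dist (f12 q) (f12 p) < e" "dist (f21 q') (f21 p) < e"
    using r12(2) r21(2) by blast+
  then have "\<bar>f12 p - f21 p\<bar> < 2 * e" using q(3) by (simp add: dist_real_def)
  then show False by (simp add: e_def)
qed

lemma has_vector_derivative_vec_nth_real:
  fixes F :: "'a::real_normed_vector \<Rightarrow> real^'n"
  assumes "((\<lambda>t. F (p + t *\<^sub>R a)) has_vector_derivative d) (at 0)"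
  shows "((\<lambda>t. F (p + t *\<^sub>R a) $ k) has_real_derivative d $ k) (at 0)"
  using bounded_linear.has_vector_derivative[OF bounded_linear_vec_nth assms]
  unfolding has_real_derivative_iff_has_vector_derivative .

lemma pd_pd_commute:
  fixes f :: "real^2 \<Rightarrow> real^'n"
  assumes T: "open T" "p \<in> T" and f2: "Ck (Suc (Suc k)) T f"
  shows "pd (pd f i) j p = pd (pd f j) i p"
proof -
  have f1: "Ck (Suc k) T (pd f l)" for l by (rule Ck_Suc_open_Ck_pd[OF T(1) f2])
  have d: "((\<lambda>t. f (q + t *\<^sub>R axis l 1) $ r) has_real_derivative pd f l q $ r) (at 0)"
    and dd: "((\<lambda>t. pd f l (q + t *\<^sub>R axis l' 1) $ r) has_real_derivative pd (pd f l) l' q $ r) (at 0)"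
    if "q \<in> T" for q l l' r
    using that Ck_Suc_open_has_pd[OF T(1) f2] Ck_Suc_open_has_pd[OF T(1) f1]
    by (blast intro: has_vector_derivative_vec_nth_real)+
  have c: "continuous_on T (\<lambda>q. pd (pd f l) l' q $ r)" for l l' r
    by (intro continuous_on_component Ck_imp_continuous_on[of k] Ck_Suc_open_Ck_pd[OF T(1) f1])
  show ?thesis
    by (rule iffD2[OF vec_eq_iff], rule allI, rule mixed_partials_eq[OF T d d dd dd c c])
qed

section \<open>The area element along a variation\<close>

definition gram :: "'a::real_inner \<Rightarrow> 'a \<Rightarrow> real" where
  "gram a b = (a \<bullet> a) * (b \<bullet> b) - (a \<bullet> b)\<^sup>2"

definition gram_deriv :: "'a::real_inner \<Rightarrow> 'a \<Rightarrow> 'a \<Rightarrow> 'a \<Rightarrow> real" where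
  "gram_deriv a b v w = 2 * (a \<bullet> v) * (b \<bullet> b) + 2 * (a \<bullet> a) * (b \<bullet> w) - 2 * (a \<bullet> b) * (a \<bullet> w + v \<bullet> b)"

definition gram_deriv2 :: "'a::real_inner \<Rightarrow> 'a \<Rightarrow> 'a \<Rightarrow> 'a \<Rightarrow> real" where
  "gram_deriv2 a b v w = 2 * (v \<bullet> v) * (b \<bullet> b) + 8 * (a \<bullet> v) * (b \<bullet> w) + 2 * (a \<bullet> a) * (w \<bullet> w)
     - 2 * (a \<bullet> w + v \<bullet> b)\<^sup>2 - 4 * (a \<bullet> b) * (v \<bullet> w)"

lemma has_real_derivative_inner_line:
  fixes a b v w :: "'a::real_inner"
  shows "((\<lambda>e. (a + e *\<^sub>R v) \<bullet> (b + e *\<^sub>R w)) has_real_derivative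
    (a + e *\<^sub>R v) \<bullet> w + v \<bullet> (b + e *\<^sub>R w)) (at e)"
proof -
  have "((\<lambda>e. a \<bullet> b + e * (a \<bullet> w + v \<bullet> b) + e\<^sup>2 * (v \<bullet> w)) has_real_derivative
      (a \<bullet> w + v \<bullet> b) + 2 * e * (v \<bullet> w)) (at e)"
    by (auto intro!: derivative_eq_intros)
  then show ?thesis
    by (simp add: power2_eq_square algebra_simps)
qed

lemma has_real_derivative_gram_line:
  fixes a b v w :: "'a::real_inner"
  shows "((\<lambda>e. gram (a + e *\<^sub>R v) (b + e *\<^sub>R w)) has_real_derivative
    gram_deriv (a + e *\<^sub>R v) (b + e *\<^sub>R w) v w) (at e)"
proof -
  define A where "A e = a + e *\<^sub>R v" for e :: real
  define B where "B e = b + e *\<^sub>R w" for e :: real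
  have AA: "((\<lambda>e. A e \<bullet> A e) has_real_derivative 2 * (A e \<bullet> v)) (at e)"
    using has_real_derivative_inner_line[of a v a v e] by (simp add: A_def inner_commute[of v])
  have BB: "((\<lambda>e. B e \<bullet> B e) has_real_derivative 2 * (B e \<bullet> w)) (at e)"
    using has_real_derivative_inner_line[of b w b w e] by (simp add: B_def inner_commute[of w])
  have AB: "((\<lambda>e. A e \<bullet> B e) has_real_derivative A e \<bullet> w + v \<bullet> B e) (at e)"
    using has_real_derivative_inner_line[of a v b w e] by (simp add: A_def B_def)
  from DERIV_diff[OF DERIV_mult[OF AA BB] DERIV_mult[OF AB AB]]
  show ?thesis
    unfolding A_def[symmetric] B_def[symmetric] gram_def gram_deriv_def power2_eq_square
    by (simp add: algebra_simps)
qed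

lemma has_real_derivative_gram_deriv_line:
  fixes a b v w :: "'a::real_inner"
  shows "((\<lambda>e. gram_deriv (a + e *\<^sub>R v) (b + e *\<^sub>R w) v w) has_real_derivative
    gram_deriv2 (a + e *\<^sub>R v) (b + e *\<^sub>R w) v w) (at e)"
proof -
  define A where "A e = a + e *\<^sub>R v" for e :: real
  define B where "B e = b + e *\<^sub>R w" for e :: real
  have AA: "((\<lambda>e. A e \<bullet> A e) has_real_derivative 2 * (A e \<bullet> v)) (at e)"
    using has_real_derivative_inner_line[of a v a v e] by (simp add: A_def inner_commute[of v])
  have BB: "((\<lambda>e. B e \<bullet> B e) has_real_derivative 2 * (B e \<bullet> w)) (at e)"
    using has_real_derivative_inner_line[of b w b w e] by (simp add: B_def inner_commute[of w])
  have AB: "((\<lambda>e. A e \<bullet> B e) has_real_derivative A e \<bullet> w + v \<bullet> B e) (at e)"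
    using has_real_derivative_inner_line[of a v b w e] by (simp add: A_def B_def)
  have Av: "((\<lambda>e. A e \<bullet> v) has_real_derivative v \<bullet> v) (at e)"
    using has_real_derivative_inner_line[of a v v 0 e] by (simp add: A_def)
  have Bw: "((\<lambda>e. B e \<bullet> w) has_real_derivative w \<bullet> w) (at e)"
    using has_real_derivative_inner_line[of b w w 0 e] by (simp add: B_def)
  have F: "((\<lambda>e. A e \<bullet> w + v \<bullet> B e) has_real_derivative 2 * (v \<bullet> w)) (at e)"
    using DERIV_add[OF has_real_derivative_inner_line[of a v w 0 e]
        has_real_derivative_inner_line[of v 0 b w e]]
    by (simp add: A_def B_def)
  from DERIV_diff[OF DERIV_add[OF DERIV_mult[OF DERIV_cmult[OF Av, of 2] BB]
      DERIV_mult[OF DERIV_cmult[OF AA, of 2] Bw]]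
      DERIV_mult[OF DERIV_cmult[OF AB, of 2] F]]
  show ?thesis
    unfolding A_def[symmetric] B_def[symmetric] gram_deriv_def gram_deriv2_def power2_eq_square
    by (simp add: algebra_simps)
qed

lemma gram_conformal: "a \<bullet> a = W \<Longrightarrow> b \<bullet> b = W \<Longrightarrow> a \<bullet> b = 0 \<Longrightarrow> gram a b = W\<^sup>2"
  by (simp add: gram_def power2_eq_square)

lemma sqrt_gram_second_derivative_conformal:
  fixes a b v w :: "'a::real_inner"
  assumes "a \<bullet> a = W" "b \<bullet> b = W" "a \<bullet> b = 0" "W > 0"
  shows "gram_deriv2 a b v w / (2 * sqrt (gram a b))
      - (gram_deriv a b v w)\<^sup>2 / (4 * gram a b * sqrt (gram a b))
    = v \<bullet> v + w \<bullet> w - ((a \<bullet> v - b \<bullet> w)\<^sup>2 + (a \<bullet> w + v \<bullet> b)\<^sup>2) / W"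
proof -
  define F where "F = a \<bullet> w + v \<bullet> b"
  have s: "sqrt (gram a b) = W" using assms by (simp add: gram_conformal)
  have g: "gram a b = W\<^sup>2" using assms by (simp add: gram_conformal)
  have d: "gram_deriv a b v w = 2 * W * (a \<bullet> v + b \<bullet> w)"
    using assms by (simp add: gram_deriv_def algebra_simps)
  have d2: "gram_deriv2 a b v w = 2 * W * (v \<bullet> v + w \<bullet> w) + 8 * (a \<bullet> v) * (b \<bullet> w) - 2 * F\<^sup>2"
    using assms by (simp add: gram_deriv2_def F_def algebra_simps)
  show ?thesis
    unfolding s g d d2 F_def[symmetric] using \<open>W > 0\<close>
    by (simp add: field_simps power2_eq_square)
qed

lemma DERIV_sqrt_comp:
  assumes "(P has_real_derivative P') (at e)" "P e > 0"
  shows "((\<lambda>e. sqrt (P e)) has_real_derivative P' / (2 * sqrt (P e))) (at e)"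
  using DERIV_chain2[OF DERIV_real_sqrt[OF assms(2)] assms(1)] by (simp add: field_simps)

lemma DERIV_sqrt_comp_deriv:
  assumes P: "(P has_real_derivative P' e) (at e)" and P': "(P' has_real_derivative P'') (at e)"
    and pos: "P e > 0"
  shows "((\<lambda>e. P' e / (2 * sqrt (P e))) has_real_derivative
     P'' / (2 * sqrt (P e)) - (P' e)\<^sup>2 / (4 * P e * sqrt (P e))) (at e)"
proof -
  have s: "sqrt (P e) > 0" using pos by simp
  have "((\<lambda>e. 2 * sqrt (P e)) has_real_derivative 2 * (P' e / (2 * sqrt (P e)))) (at e)"
    by (rule DERIV_cmult[OF DERIV_sqrt_comp[OF P pos]])
  from DERIV_divide[OF P' this] s
  have "((\<lambda>e. P' e / (2 * sqrt (P e))) has_real_derivative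
     (P'' * (2 * sqrt (P e)) - P' e * (2 * (P' e / (2 * sqrt (P e))))) / (2 * sqrt (P e))\<^sup>2) (at e)"
    by (simp add: power2_eq_square)
  moreover have "(P'' * (2 * sqrt (P e)) - P' e * (2 * (P' e / (2 * sqrt (P e))))) / (2 * sqrt (P e))\<^sup>2
      = P'' / (2 * sqrt (P e)) - (P' e)\<^sup>2 / (4 * P e * sqrt (P e))"
    using s pos by (simp add: field_simps power2_eq_square)
  ultimately show ?thesis by simp
qed

section \<open>Differentiation under the integral sign\<close>

lemma integrable_on_compact_continuous:
  fixes f :: "'a::euclidean_space \<Rightarrow> real"
  assumes "compact S" "continuous_on S f"
  shows "f integrable_on S"
proof -
  have "(\<lambda>x. indicator S x *\<^sub>R f x) integrable_on UNIV"
    by (rule integrable_on_lborel[OF borel_integrable_compact[OF assms]])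
  moreover have "(\<lambda>x. indicator S x *\<^sub>R f x) = (\<lambda>x. if x \<in> S then f x else 0)"
    by (auto simp: indicator_def)
  ultimately show ?thesis by (simp only: integrable_restrict_UNIV)
qed

lemma integral_vanishing_outside:
  fixes f :: "'a::euclidean_space \<Rightarrow> real"
  assumes "\<And>p. p \<notin> S \<Longrightarrow> f p = 0" "S \<subseteq> B"
  shows "integral B f = integral UNIV f"
proof -
  have "(\<lambda>x. if x \<in> B then f x else 0) = f" using assms by fastforce
  then show ?thesis using integral_restrict_UNIV[of B f] by simp
qed

lemma continuous_on_Times_vanishing_outside:
  fixes F :: "real \<times> 'a::topological_space \<Rightarrow> real"
  assumes "open U" "open Ob" "closed S" "S \<subseteq> Ob" "continuous_on (U \<times> Ob) F"
    and "\<And>e p. e \<in> U \<Longrightarrow> p \<notin> S \<Longrightarrow> F (e, p) = 0"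
  shows "continuous_on (U \<times> UNIV) F"
proof -
  have "continuous_on (U \<times> - S) F"
    by (rule continuous_on_eq[OF continuous_on_const[of _ 0]]) (use assms(6) in auto)
  then have "continuous_on (U \<times> Ob \<union> U \<times> - S) F"
    using assms by (intro continuous_on_open_Un) (auto intro: open_Times)
  moreover have "U \<times> Ob \<union> U \<times> - S = U \<times> UNIV" using assms(4) by auto
  ultimately show ?thesis by simp
qed

lemma uniformly_positive_near_zero:
  fixes P :: "real \<Rightarrow> 'a::metric_space \<Rightarrow> real"
  assumes S: "compact S" and c: "continuous_on ({-1..1} \<times> S) (\<lambda>(e, p). P e p)"
    and pos: "\<And>p. p \<in> S \<Longrightarrow> P 0 p > 0"
  shows "\<exists>\<delta>>0. \<forall>e p. \<bar>e\<bar> < \<delta> \<longrightarrow> p \<in> S \<longrightarrow> P e p > 0"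
proof (cases "S = {}")
  case True
  then show ?thesis by (intro exI[of _ 1]) auto
next
  case False
  have "continuous_on S (\<lambda>p. (\<lambda>(e, p). P e p) (0::real, p))"
    by (rule continuous_on_compose2[OF c]) (auto intro!: continuous_intros)
  then obtain p0 where p0: "p0 \<in> S" "\<And>p. p \<in> S \<Longrightarrow> P 0 p0 \<le> P 0 p"
    using continuous_attains_inf[OF S False] by (metis case_prod_conv)
  have "uniformly_continuous_on ({-1..1} \<times> S) (\<lambda>(e, p). P e p)"
    using S by (intro compact_uniformly_continuous[OF c] compact_Times) auto
  moreover have "P 0 p0 > 0" using pos p0 by simp
  ultimately obtain d where d: "d > 0" "\<And>x x'. x \<in> {-1..1} \<times> S \<Longrightarrow> x' \<in> {-1..1} \<times> S \<Longrightarrow>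
      dist x' x < d \<Longrightarrow> dist ((\<lambda>(e, p). P e p) x') ((\<lambda>(e, p). P e p) x) < P 0 p0"
    unfolding uniformly_continuous_on_def by metis
  show ?thesis
  proof (intro exI[of _ "min d 1"] conjI allI impI)
    fix e p assume e: "\<bar>e\<bar> < min d 1" and p: "p \<in> S"
    have "dist (e, p) (0, p) = \<bar>e\<bar>" by (simp add: dist_Pair_Pair dist_real_def)
    then have "dist (P e p) (P 0 p) < P 0 p0"
      using d(2)[of "(0, p)" "(e, p)"] e p by (auto simp: abs_less_iff)
    then show "P e p > 0" using p0(2)[OF p] by (simp add: dist_real_def abs_less_iff)
  qed (use d in simp)
qed

lemma continuous_on_Times_slice:
  assumes "continuous_on (U \<times> T) (\<lambda>x. g (fst x) (snd x))" "e \<in> U"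
  shows "continuous_on T (g e)"
proof -
  have "continuous_on T (\<lambda>p. (\<lambda>x. g (fst x) (snd x)) (e, p))"
    by (rule continuous_on_compose2[OF assms(1)]) (use assms(2) in \<open>auto intro!: continuous_intros\<close>)
  then show ?thesis by simp
qed

lemma has_real_derivative_integral_vanishing_outside:
  fixes k k' :: "real \<Rightarrow> 'a::euclidean_space \<Rightarrow> real"
  assumes U: "open U" "convex U" "e \<in> U" and S: "compact S" "S \<subseteq> B"
    and d: "\<And>e p. e \<in> U \<Longrightarrow> ((\<lambda>e. k e p) has_real_derivative k' e p) (at e)"
    and ck: "continuous_on (U \<times> UNIV) (\<lambda>x. k (fst x) (snd x))"
    and ck': "continuous_on (U \<times> UNIV) (\<lambda>x. k' (fst x) (snd x))"
    and out: "\<And>e p. p \<notin> S \<Longrightarrow> k e p = 0" "\<And>e p. p \<notin> S \<Longrightarrow> k' e p = 0"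
  shows "((\<lambda>e. integral B (k e)) has_real_derivative integral B (k' e)) (at e)"
proof -
  obtain a where a: "S \<subseteq> cbox (- a) a"
    using bounded_subset_cbox_symmetric[OF compact_imp_bounded[OF S(1)]] by blast
  have cbox: "integral B g = integral (cbox (- a) a) g"
    if "\<And>p. p \<notin> S \<Longrightarrow> g p = 0" for g :: "'a \<Rightarrow> real"
    using integral_vanishing_outside[OF that S(2)] integral_vanishing_outside[OF that a] by simp
  have "((\<lambda>e. integral (cbox (- a) a) (k e)) has_real_derivative integral (cbox (- a) a) (k' e))
      (at e within U)"
  proof (rule leibniz_rule_field_derivative[OF _ _ _ U(3,2)])
    show "((\<lambda>e. k e p) has_real_derivative k' e p) (at e within U)" if "e \<in> U" for e p
      using d[OF that] by (rule has_field_derivative_at_within)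
    show "k e integrable_on cbox (- a) a" if "e \<in> U" for e
      using continuous_on_Times_slice[OF ck that]
      by (intro integrable_continuous) (auto intro: continuous_on_subset)
    show "continuous_on (U \<times> cbox (- a) a) (\<lambda>(e, p). k' e p)"
      using continuous_on_subset[OF ck'] by (simp add: case_prod_beta subset_iff)
  qed
  moreover have "integral B (k e) = integral (cbox (- a) a) (k e)"
    and "integral B (k' e) = integral (cbox (- a) a) (k' e)" for e
    using cbox[of "k e"] cbox[of "k' e"] out by blast+
  ultimately show ?thesis by (simp add: at_within_open[OF U(3,1)])
qed

lemma deriv2_integral_vanishing_outside:
  fixes f f' f'' :: "real \<Rightarrow> 'a::euclidean_space \<Rightarrow> real"
  assumes U: "open U" "convex U" "0 \<in> U" and S: "compact S" "S \<subseteq> B" and B: "compact B"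
    and d: "\<And>e p. e \<in> U \<Longrightarrow> ((\<lambda>e. f e p) has_real_derivative f' e p) (at e)"
    and d': "\<And>e p. e \<in> U \<Longrightarrow> ((\<lambda>e. f' e p) has_real_derivative f'' e p) (at e)"
    and c: "continuous_on (U \<times> UNIV) (\<lambda>x. f (fst x) (snd x) - f 0 (snd x))"
    and c': "continuous_on (U \<times> UNIV) (\<lambda>x. f' (fst x) (snd x))"
    and c'': "continuous_on (U \<times> UNIV) (\<lambda>x. f'' (fst x) (snd x))"
    and out: "\<And>e p. p \<notin> S \<Longrightarrow> f e p = f 0 p" "\<And>e p. p \<notin> S \<Longrightarrow> f' e p = 0"
      "\<And>e p. p \<notin> S \<Longrightarrow> f'' e p = 0"
    and f0: "f 0 integrable_on B"
  shows "deriv (deriv (\<lambda>e. integral B (f e))) 0 = integral B (f'' 0)"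
    and "f'' 0 integrable_on B"
proof -
  define k where "k e p = f e p - f 0 p" for e p
  have "k e integrable_on B" if "e \<in> U" for e
    using continuous_on_Times_slice[OF c[folded k_def] that]
    by (intro integrable_on_compact_continuous[OF B]) (auto intro: continuous_on_subset)
  then have split: "integral B (f e) = integral B (f 0) + integral B (k e)" if "e \<in> U" for e
    using integral_add[OF f0, of "k e"] that by (simp add: k_def)
  have dk: "((\<lambda>e. k e p) has_real_derivative f' e p) (at e)" if "e \<in> U" for e p
    using DERIV_diff[OF d[OF that] DERIV_const] by (simp add: k_def)
  have kout: "k e p = 0" if "p \<notin> S" for e p
    using out(1)[OF that] by (simp add: k_def)
  have "((\<lambda>e. integral B (f 0) + integral B (k e)) has_real_derivative integral B (f' e)) (at e)"
    if "e \<in> U" for e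
    using DERIV_add[OF DERIV_const has_real_derivative_integral_vanishing_outside[OF U(1,2) that S
          dk c[folded k_def] c' kout out(2)]] by simp
  then have "((\<lambda>e. integral B (f e)) has_real_derivative integral B (f' e)) (at e)" if "e \<in> U" for e
    by (rule has_field_derivative_transform_within_open[OF _ U(1) that]) (use that split in auto)
  then have deriv1: "deriv (\<lambda>e. integral B (f e)) e = integral B (f' e)" if "e \<in> U" for e
    using that by (simp add: DERIV_imp_deriv)
  have "((\<lambda>e. integral B (f' e)) has_real_derivative integral B (f'' 0)) (at 0)"
    by (rule has_real_derivative_integral_vanishing_outside[OF U S d' c' c'' out(2,3)])
  then have "(deriv (\<lambda>e. integral B (f e)) has_real_derivative integral B (f'' 0)) (at 0)"
    by (rule has_field_derivative_transform_within_open[OF _ U(1,3)]) (use deriv1 in auto)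
  then show "deriv (deriv (\<lambda>e. integral B (f e))) 0 = integral B (f'' 0)"
    by (rule DERIV_imp_deriv)
  show "f'' 0 integrable_on B"
    using continuous_on_Times_slice[OF c'' U(3)]
    by (intro integrable_on_compact_continuous[OF B]) (auto intro: continuous_on_subset)
qed

lemma positive_on_interval_around_zero:
  fixes P :: "real \<Rightarrow> 'a::metric_space \<Rightarrow> real"
  assumes S: "compact S" "S \<subseteq> Ob" and cP: "continuous_on (UNIV \<times> Ob) (\<lambda>x. P (fst x) (snd x))"
    and out: "\<And>e p. p \<notin> S \<Longrightarrow> P e p = P 0 p" and pos: "\<And>p. p \<in> Ob \<Longrightarrow> P 0 p > 0"
  obtains U where "open U" "convex U" "0 \<in> U" "\<And>e p. e \<in> U \<Longrightarrow> p \<in> Ob \<Longrightarrow> P e p > 0"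
proof -
  have "continuous_on ({-1..1} \<times> S) (\<lambda>(e, p). P e p)"
    using continuous_on_subset[OF cP, of "{-1..1} \<times> S"] S(2) by (auto simp: case_prod_beta)
  then obtain \<delta> where "\<delta> > 0" and \<delta>: "\<And>e p. \<bar>e\<bar> < \<delta> \<Longrightarrow> p \<in> S \<Longrightarrow> P e p > 0"
    using uniformly_positive_near_zero[OF S(1)] pos S(2) by blast
  show ?thesis
  proof (rule that[of "{-\<delta><..<\<delta>}"])
    show "P e p > 0" if "e \<in> {-\<delta><..<\<delta>}" "p \<in> Ob" for e p
      using \<delta>[of e p] out[of p e] pos[OF that(2)] that(1) by (cases "p \<in> S") auto
  qed (use \<open>\<delta> > 0\<close> in auto)
qed

lemma continuous_on_sqrt_comp_derivatives:
  fixes P P' P'' :: "real \<Rightarrow> 'a::topological_space \<Rightarrow> real"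
  assumes "0 \<in> U"
    and cP: "continuous_on (U \<times> Ob) (\<lambda>x. P (fst x) (snd x))"
    and cP': "continuous_on (U \<times> Ob) (\<lambda>x. P' (fst x) (snd x))"
    and cP'': "continuous_on (U \<times> Ob) (\<lambda>x. P'' (fst x) (snd x))"
    and pos: "\<And>e p. e \<in> U \<Longrightarrow> p \<in> Ob \<Longrightarrow> P e p > 0"
  shows "continuous_on (U \<times> Ob) (\<lambda>x. sqrt (P (fst x) (snd x)) - sqrt (P 0 (snd x)))"
    and "continuous_on (U \<times> Ob) (\<lambda>x. P' (fst x) (snd x) / (2 * sqrt (P (fst x) (snd x))))"
    and "continuous_on (U \<times> Ob) (\<lambda>x. P'' (fst x) (snd x) / (2 * sqrt (P (fst x) (snd x)))
      - (P' (fst x) (snd x))\<^sup>2 / (4 * P (fst x) (snd x) * sqrt (P (fst x) (snd x))))"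
proof -
  have "continuous_on (U \<times> Ob) (\<lambda>x. (\<lambda>x. P (fst x) (snd x)) (0::real, snd x))"
    by (rule continuous_on_compose2[OF cP]) (use \<open>0 \<in> U\<close> in \<open>auto intro!: continuous_intros\<close>)
  then have cP0: "continuous_on (U \<times> Ob) (\<lambda>x. P 0 (snd x))" by simp
  have nz: "P (fst x) (snd x) \<noteq> 0" "sqrt (P (fst x) (snd x)) \<noteq> 0" if "x \<in> U \<times> Ob" for x
    using pos[of "fst x" "snd x"] that by auto
  show "continuous_on (U \<times> Ob) (\<lambda>x. sqrt (P (fst x) (snd x)) - sqrt (P 0 (snd x)))"
    by (intro continuous_intros cP cP0)
  show "continuous_on (U \<times> Ob) (\<lambda>x. P' (fst x) (snd x) / (2 * sqrt (P (fst x) (snd x))))"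
    by (intro continuous_intros cP cP') (use nz in auto)
  show "continuous_on (U \<times> Ob) (\<lambda>x. P'' (fst x) (snd x) / (2 * sqrt (P (fst x) (snd x)))
      - (P' (fst x) (snd x))\<^sup>2 / (4 * P (fst x) (snd x) * sqrt (P (fst x) (snd x))))"
    by (intro continuous_intros cP cP' cP'') (use nz in auto)
qed

lemma deriv2_integral_sqrt:
  fixes P P' P'' :: "real \<Rightarrow> 'a::euclidean_space \<Rightarrow> real"
  assumes Ob: "open Ob" and S: "compact S" "S \<subseteq> Ob" "S \<subseteq> B" and B: "compact B"
    and dP: "\<And>e p. ((\<lambda>e. P e p) has_real_derivative P' e p) (at e)"
    and dP': "\<And>e p. ((\<lambda>e. P' e p) has_real_derivative P'' e p) (at e)"
    and cP: "continuous_on (UNIV \<times> Ob) (\<lambda>x. P (fst x) (snd x))"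
    and cP': "continuous_on (UNIV \<times> Ob) (\<lambda>x. P' (fst x) (snd x))"
    and cP'': "continuous_on (UNIV \<times> Ob) (\<lambda>x. P'' (fst x) (snd x))"
    and out: "\<And>e p. p \<notin> S \<Longrightarrow> P e p = P 0 p \<and> P' e p = 0 \<and> P'' e p = 0"
    and pos: "\<And>p. p \<in> Ob \<Longrightarrow> P 0 p > 0"
    and int0: "(\<lambda>p. sqrt (P 0 p)) integrable_on B"
  defines "Q \<equiv> \<lambda>p. P'' 0 p / (2 * sqrt (P 0 p)) - (P' 0 p)\<^sup>2 / (4 * P 0 p * sqrt (P 0 p))"
  shows "deriv (deriv (\<lambda>e. integral B (\<lambda>p. sqrt (P e p)))) 0 = integral B Q"
    and "Q integrable_on B"
proof -
  obtain U where U: "open U" "convex U" "0 \<in> U" and posU: "\<And>e p. e \<in> U \<Longrightarrow> p \<in> Ob \<Longrightarrow> P e p > 0"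
    using positive_on_interval_around_zero[OF S(1,2) cP _ pos] out by blast
  define f where "f e p = sqrt (P e p)" for e p
  define f' where "f' e p = P' e p / (2 * sqrt (P e p))" for e p
  define f'' where "f'' e p = P'' e p / (2 * sqrt (P e p)) - (P' e p)\<^sup>2 / (4 * P e p * sqrt (P e p))"
    for e p
  have fout: "f e p = sqrt (P 0 p)" "f' e p = 0" "f'' e p = 0" if "p \<notin> S" for e p
    using out[OF that, of e] by (auto simp: f_def f'_def f''_def)
  have f0: "f e p = f 0 p" if "p \<notin> S" for e p
    using fout(1)[OF that, of e] fout(1)[OF that, of 0] by simp
  have df: "((\<lambda>e. f e p) has_real_derivative f' e p) (at e)" if "e \<in> U" for e p
  proof (cases "p \<in> Ob")
    case True
    then show ?thesis unfolding f_def f'_def by (rule DERIV_sqrt_comp[OF dP posU[OF that]])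
  next
    case False
    with S(2) have "p \<notin> S" by blast
    then show ?thesis by (simp add: fout)
  qed
  have df': "((\<lambda>e. f' e p) has_real_derivative f'' e p) (at e)" if "e \<in> U" for e p
  proof (cases "p \<in> Ob")
    case True
    then show ?thesis unfolding f'_def f''_def by (rule DERIV_sqrt_comp_deriv[OF dP dP' posU[OF that]])
  next
    case False
    with S(2) have "p \<notin> S" by blast
    then show ?thesis by (simp add: fout)
  qed
  note extend = continuous_on_Times_vanishing_outside[OF U(1) Ob compact_imp_closed[OF S(1)] S(2)]
  have UOb: "U \<times> Ob \<subseteq> UNIV \<times> Ob" by auto
  note cont = continuous_on_sqrt_comp_derivatives[OF U(3) continuous_on_subset[OF cP UOb]
      continuous_on_subset[OF cP' UOb] continuous_on_subset[OF cP'' UOb] posU,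
      folded f_def f'_def f''_def]
  have cf: "continuous_on (U \<times> UNIV) (\<lambda>x. f (fst x) (snd x) - f 0 (snd x))"
    by (rule extend[OF cont(1)]) (use fout(1) in auto)
  have cf': "continuous_on (U \<times> UNIV) (\<lambda>x. f' (fst x) (snd x))"
    by (rule extend[OF cont(2)]) (use fout(2) in auto)
  have cf'': "continuous_on (U \<times> UNIV) (\<lambda>x. f'' (fst x) (snd x))"
    by (rule extend[OF cont(3)]) (use fout(3) in auto)
  have "f 0 = (\<lambda>p. sqrt (P 0 p))" "f'' 0 = Q"
    "(\<lambda>e. integral B (f e)) = (\<lambda>e. integral B (\<lambda>p. sqrt (P e p)))"
    by (simp_all add: Q_def f_def[abs_def] f''_def[abs_def])
  then show "deriv (deriv (\<lambda>e. integral B (\<lambda>p. sqrt (P e p)))) 0 = integral B Q"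
    and "Q integrable_on B"
    using deriv2_integral_vanishing_outside[OF U S(1,3) B df df' cf cf' cf'' f0 fout(2,3)] int0
    by simp_all
qed

section \<open>Conformal immersions with flat normal bundle\<close>

lemma span_conformal_normal_frame:
  fixes A1 A2 :: "real^'n" and Nv :: "nat \<Rightarrow> real^'n"
  assumes card: "CARD('n) = m + 2"
    and on: "\<And>\<omega> \<omega>'. \<omega> < m \<Longrightarrow> \<omega>' < m \<Longrightarrow> Nv \<omega> \<bullet> Nv \<omega>' = (if \<omega> = \<omega>' then 1 else 0)"
    and a1: "\<And>\<omega>. \<omega> < m \<Longrightarrow> A1 \<bullet> Nv \<omega> = 0" and a2: "\<And>\<omega>. \<omega> < m \<Longrightarrow> A2 \<bullet> Nv \<omega> = 0"
    and o12: "A1 \<bullet> A2 = 0" and nz: "A1 \<noteq> 0" "A2 \<noteq> 0"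
  shows "span (insert A1 (insert A2 (Nv ` {..<m}))) = UNIV"
proof -
  define Bs where "Bs = insert A1 (insert A2 (Nv ` {..<m}))"
  have "inj_on Nv {..<m}"
  proof (rule inj_onI)
    fix x y assume "x \<in> {..<m}" "y \<in> {..<m}" "Nv x = Nv y"
    then show "x = y" using on[of x y] on[of x x] by (auto split: if_splits)
  qed
  then have "card (Nv ` {..<m}) = m" by (simp add: card_image)
  moreover have "A2 \<notin> Nv ` {..<m}"
  proof
    assume "A2 \<in> Nv ` {..<m}"
    then obtain \<omega> where "\<omega> < m" "A2 = Nv \<omega>" by auto
    then show False using a2[of \<omega>] on[of \<omega> \<omega>] by simp
  qed
  moreover have "A1 \<notin> insert A2 (Nv ` {..<m})"
  proof
    assume "A1 \<in> insert A2 (Nv ` {..<m})"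
    moreover have "A1 \<noteq> A2" using o12 nz by auto
    ultimately obtain \<omega> where "\<omega> < m" "A1 = Nv \<omega>" by auto
    then show False using a1[of \<omega>] on[of \<omega> \<omega>] by simp
  qed
  ultimately have "card Bs = CARD('n)" using card by (simp add: Bs_def)
  moreover have "pairwise orthogonal Bs"
    unfolding pairwise_def Bs_def orthogonal_def using on a1 a2 o12 by (auto simp: inner_commute)
  moreover have "0 \<notin> Bs" unfolding Bs_def using nz on by force
  ultimately have "independent Bs" "card Bs = CARD('n)"
    using pairwise_orthogonal_independent by blast+
  then have "UNIV \<subseteq> span Bs" by (intro card_ge_dim_independent) auto
  then show ?thesis by (auto simp: Bs_def)
qed

lemma inner_self_conformal_tangent:
  fixes A1 A2 v :: "real^'n" and Nv :: "nat \<Rightarrow> real^'n"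
  assumes card: "CARD('n) = m + 2"
    and on: "\<And>\<omega> \<omega>'. \<omega> < m \<Longrightarrow> \<omega>' < m \<Longrightarrow> Nv \<omega> \<bullet> Nv \<omega>' = (if \<omega> = \<omega>' then 1 else 0)"
    and a1: "\<And>\<omega>. \<omega> < m \<Longrightarrow> A1 \<bullet> Nv \<omega> = 0" and a2: "\<And>\<omega>. \<omega> < m \<Longrightarrow> A2 \<bullet> Nv \<omega> = 0"
    and w1: "A1 \<bullet> A1 = W" and w2: "A2 \<bullet> A2 = W" and o12: "A1 \<bullet> A2 = 0" and W: "W > 0"
    and v: "\<And>\<omega>. \<omega> < m \<Longrightarrow> v \<bullet> Nv \<omega> = 0"
  shows "v \<bullet> v = ((v \<bullet> A1)\<^sup>2 + (v \<bullet> A2)\<^sup>2) / W"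
proof -
  define w where "w = v - ((v \<bullet> A1) / W) *\<^sub>R A1 - ((v \<bullet> A2) / W) *\<^sub>R A2"
  have "A1 \<noteq> 0" "A2 \<noteq> 0" using w1 w2 W by auto
  with span_conformal_normal_frame[OF card on a1 a2 o12]
  have span: "span (insert A1 (insert A2 (Nv ` {..<m}))) = UNIV" by blast
  have "w \<bullet> A1 = 0" "w \<bullet> A2 = 0"
    using W w1 w2 o12 inner_commute[of A2 A1] by (simp_all add: w_def inner_diff_left)
  moreover have "w \<bullet> Nv \<omega> = 0" if "\<omega> < m" for \<omega>
    using v a1 a2 that by (simp add: w_def inner_diff_left)
  ultimately have "orthogonal w y" if "y \<in> insert A1 (insert A2 (Nv ` {..<m}))" for y
    using that by (auto simp: orthogonal_def)
  then have "orthogonal w w" using orthogonal_to_span span by blast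
  then have "w = 0" by (simp add: orthogonal_def)
  then have "v = ((v \<bullet> A1) / W) *\<^sub>R A1 + ((v \<bullet> A2) / W) *\<^sub>R A2"
    by (simp add: w_def algebra_simps)
  then have "v \<bullet> v = v \<bullet> (((v \<bullet> A1) / W) *\<^sub>R A1 + ((v \<bullet> A2) / W) *\<^sub>R A2)"
    by metis
  also have "\<dots> = ((v \<bullet> A1)\<^sup>2 + (v \<bullet> A2)\<^sup>2) / W"
    by (simp add: inner_add_right power2_eq_square add_divide_distrib)
  finally show ?thesis .
qed

lemma interior_Bdisc: "interior Bdisc = ball 0 1"
  by (simp add: Bdisc_def)

lemma ball_subset_Bdisc: "ball 0 1 \<subseteq> Bdisc"
  by (auto simp: Bdisc_def)

lemma compact_Bdisc: "compact Bdisc"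
  by (simp add: Bdisc_def)

locale conformal_flat_normal_immersion =
  fixes X :: "real^2 \<Rightarrow> real^'n" and N :: "nat \<Rightarrow> real^2 \<Rightarrow> real^'n"
  assumes card: "CARD('n) \<ge> 3"
    and C3: "Ck 3 Bdisc X"
    and conformal: "conformal_immersion X"
    and normal_section: "ON_normal_section X N"
    and flat: "torsion_free N"
begin

lemma Ck_X_ball: "Ck (Suc (Suc (Suc 0))) (ball 0 1) X"
  using Ck_subset_open[OF C3 ball_subset_Bdisc open_ball] by (simp add: numeral_3_eq_3)

lemma Ck_pd_X_ball: "Ck (Suc (Suc 0)) (ball 0 1) (pd X j)"
  by (rule Ck_Suc_open_Ck_pd[OF open_ball Ck_X_ball])

lemma has_pd_X: "p \<in> ball 0 1 \<Longrightarrow> ((\<lambda>t. X (p + t *\<^sub>R axis i 1)) has_vector_derivative pd X i p) (at 0)"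
  by (rule Ck_Suc_open_has_pd[OF open_ball Ck_X_ball])

lemma has_pd_pd_X:
  "p \<in> ball 0 1 \<Longrightarrow> ((\<lambda>t. pd X j (p + t *\<^sub>R axis i 1)) has_vector_derivative pd (pd X j) i p) (at 0)"
  by (rule Ck_Suc_open_has_pd[OF open_ball Ck_pd_X_ball])

lemma continuous_on_pd_X: "continuous_on (ball 0 1) (pd X j)"
  by (rule Ck_imp_continuous_on[OF Ck_pd_X_ball])

lemma Ck_N_ball: "\<sigma> < CARD('n) - 2 \<Longrightarrow> Ck (Suc (Suc 0)) (ball 0 1) (N \<sigma>)"
  using normal_section Ck_subset_open[OF _ ball_subset_Bdisc open_ball, of 2 "N \<sigma>"]
  by (simp add: ON_normal_section_def numeral_2_eq_2)

lemma has_pd_N: "\<sigma> < CARD('n) - 2 \<Longrightarrow> p \<in> ball 0 1 \<Longrightarrow>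
    ((\<lambda>t. N \<sigma> (p + t *\<^sub>R axis i 1)) has_vector_derivative pd (N \<sigma>) i p) (at 0)"
  by (rule Ck_Suc_open_has_pd[OF open_ball Ck_N_ball])

lemma continuous_on_N: "\<sigma> < CARD('n) - 2 \<Longrightarrow> continuous_on (ball 0 1) (N \<sigma>)"
  by (rule Ck_imp_continuous_on[OF Ck_N_ball])

lemma continuous_on_pd_N: "\<sigma> < CARD('n) - 2 \<Longrightarrow> continuous_on (ball 0 1) (pd (N \<sigma>) i)"
  by (rule Ck_imp_continuous_on[OF Ck_Suc_open_Ck_pd[OF open_ball Ck_N_ball]])

lemma pdB_X_eq_pd: "p \<in> ball 0 1 \<Longrightarrow> pdB Bdisc X i p = pd X i p"
  using pdB_eq_pd[of 2 Bdisc X p i] C3 by (simp add: interior_Bdisc numeral_3_eq_3)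

lemma pdB_N_eq_pd: "\<sigma> < CARD('n) - 2 \<Longrightarrow> p \<in> ball 0 1 \<Longrightarrow> pdB Bdisc (N \<sigma>) i p = pd (N \<sigma>) i p"
  using pdB_eq_pd[of 1 Bdisc "N \<sigma>" p i] normal_section
  by (simp add: ON_normal_section_def interior_Bdisc numeral_2_eq_2)

lemma conformal_pd_X:
  assumes "p \<in> ball 0 1"
  shows "pd X 2 p \<bullet> pd X 2 p = Wf X p" "pd X 1 p \<bullet> pd X 2 p = 0" "Wf X p > 0"
  using conformal assms ball_subset_Bdisc
  by (auto simp: conformal_immersion_def Wf_def pdB_X_eq_pd[OF assms] dest!: bspec[of _ _ p])

lemma pd_X_inner_N: "p \<in> ball 0 1 \<Longrightarrow> \<sigma> < CARD('n) - 2 \<Longrightarrow> pd X i p \<bullet> N \<sigma> p = 0"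
  using normal_section ball_subset_Bdisc by (auto simp: ON_normal_section_def pdB_X_eq_pd[symmetric])

lemma N_inner_N: "p \<in> ball 0 1 \<Longrightarrow> \<sigma> < CARD('n) - 2 \<Longrightarrow> \<omega> < CARD('n) - 2 \<Longrightarrow>
    N \<sigma> p \<bullet> N \<omega> p = (if \<sigma> = \<omega> then 1 else 0)"
  using normal_section ball_subset_Bdisc by (auto simp: ON_normal_section_def)

lemma pd_N_inner_N: "p \<in> ball 0 1 \<Longrightarrow> \<sigma> < CARD('n) - 2 \<Longrightarrow> \<omega> < CARD('n) - 2 \<Longrightarrow> \<sigma> \<noteq> \<omega> \<Longrightarrow>
    pd (N \<sigma>) i p \<bullet> N \<omega> p = 0"
  using flat ball_subset_Bdisc by (auto simp: torsion_free_def torsion_def pdB_N_eq_pd[symmetric])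

lemma N_inner_pd_N:
  assumes "p \<in> ball 0 1" "\<sigma> < CARD('n) - 2"
  shows "N \<sigma> p \<bullet> pd (N \<sigma>) i p = 0"
proof -
  have "N \<sigma> p \<bullet> pd (N \<sigma>) i p + pd (N \<sigma>) i p \<bullet> N \<sigma> p = 0"
    by (rule inner_const_derivative_along_line[OF has_pd_N[OF assms(2,1)] has_pd_N[OF assms(2,1)]
          open_ball assms(1)]) (use assms(2) N_inner_N in auto)
  then show ?thesis by (simp add: inner_commute)
qed

lemma pd_X_inner_pd_N:
  assumes "p \<in> ball 0 1" "\<sigma> < CARD('n) - 2"
  shows "pd X j p \<bullet> pd (N \<sigma>) i p = - Lcoef X N \<sigma> i j p"
proof -
  have "pd X j p \<bullet> pd (N \<sigma>) i p + pd (pd X j) i p \<bullet> N \<sigma> p = 0"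
    by (rule inner_const_derivative_along_line[OF has_pd_pd_X[OF assms(1)] has_pd_N[OF assms(2,1)]
          open_ball assms(1)]) (use assms(2) pd_X_inner_N in auto)
  then show ?thesis by (simp add: Lcoef_def)
qed

lemma Lcoef_sym: "p \<in> ball 0 1 \<Longrightarrow> Lcoef X N \<sigma> 2 1 p = Lcoef X N \<sigma> 1 2 p"
  unfolding Lcoef_def using pd_pd_commute[OF open_ball _ Ck_X_ball] by metis

lemma inner_pd_N_pd_N:
  assumes p: "p \<in> ball 0 1" and \<sigma>: "\<sigma> < CARD('n) - 2"
  shows "pd (N \<sigma>) i p \<bullet> pd (N \<sigma>) i p = ((Lcoef X N \<sigma> i 1 p)\<^sup>2 + (Lcoef X N \<sigma> i 2 p)\<^sup>2) / Wf X p"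
proof -
  have "CARD('n) = (CARD('n) - 2) + 2" using card by simp
  then have "pd (N \<sigma>) i p \<bullet> pd (N \<sigma>) i p
      = ((pd (N \<sigma>) i p \<bullet> pd X 1 p)\<^sup>2 + (pd (N \<sigma>) i p \<bullet> pd X 2 p)\<^sup>2) / Wf X p"
  proof (rule inner_self_conformal_tangent[where Nv = "\<lambda>\<omega>. N \<omega> p"])
    show "pd (N \<sigma>) i p \<bullet> N \<omega> p = 0" if "\<omega> < CARD('n) - 2" for \<omega>
      using N_inner_pd_N[OF p \<sigma>, of i] pd_N_inner_N[OF p \<sigma> that]
      by (cases "\<omega> = \<sigma>") (auto simp: inner_commute)
  qed (use p N_inner_N pd_X_inner_N conformal_pd_X in \<open>auto simp: Wf_def\<close>)
  moreover have "pd (N \<sigma>) i p \<bullet> pd X j p = - Lcoef X N \<sigma> i j p" for j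
    using pd_X_inner_pd_N[OF p \<sigma>] by (simp add: inner_commute)
  ultimately show ?thesis by simp
qed

lemma integrable_area_density: "(\<lambda>p. sqrt (gram (pd X 1 p) (pd X 2 p))) integrable_on Bdisc"
proof -
  \<comment> \<open>pd X is the two-sided derivative, uncontrolled on the boundary circle; compare with the
    continuous extension provided by Ck and discard the null set sphere 0 1.\<close>
  have "Ck (Suc (Suc (Suc 0))) Bdisc X" using C3 by (simp add: numeral_3_eq_3)
  then obtain g where g: "\<forall>i. Ck (Suc (Suc 0)) Bdisc (g i)"
    "\<forall>p\<in>ball 0 1. \<forall>i. ((\<lambda>t. X (p + t *\<^sub>R axis i 1)) has_vector_derivative g i p) (at 0)"
    using Ck.simps(2)[of "Suc (Suc 0)" Bdisc X] interior_Bdisc by auto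
  have "continuous_on Bdisc (g 1)" using g(1) Ck_imp_continuous_on by blast
  then have "(\<lambda>p. g 1 p \<bullet> g 1 p) integrable_on Bdisc"
    by (intro integrable_on_compact_continuous continuous_intros) (auto simp: Bdisc_def)
  moreover have "sqrt (gram (pd X 1 p) (pd X 2 p)) = g 1 p \<bullet> g 1 p" if "p \<in> Bdisc - sphere 0 1" for p
  proof -
    have p: "p \<in> ball 0 1" using that by (auto simp: Bdisc_def)
    then have "pd X 1 p = g 1 p" using g(2) pd_eqI by blast
    then show ?thesis
      using conformal_pd_X[OF p] by (simp add: gram_conformal Wf_def)
  qed
  ultimately show ?thesis by (rule integrable_spike[OF _ negligible_sphere])
qed

end

section \<open>Gauss curvature of a minimal surface\<close>

definition Ldet :: "(real^2 \<Rightarrow> real^'n) \<Rightarrow> (nat \<Rightarrow> real^2 \<Rightarrow> real^'n) \<Rightarrow> nat \<Rightarrow> real^2 \<Rightarrow> real" where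
  "Ldet X N \<sigma> p = Lcoef X N \<sigma> 1 1 p * Lcoef X N \<sigma> 2 2 p - (Lcoef X N \<sigma> 1 2 p)\<^sup>2"

lemma gauss_curv_eq_sum_Ldet:
  fixes X :: "real^2 \<Rightarrow> real^'n"
  shows "gauss_curv X N p = (\<Sum>\<sigma><CARD('n) - 2. Ldet X N \<sigma> p) / (Wf X p)\<^sup>2"
  unfolding gauss_curv_def Ldet_def ..

lemma minimal_gauss_curv_nonpos:
  fixes X :: "real^2 \<Rightarrow> real^'n"
  assumes "minimal_wrt X N" "p \<in> ball 0 1"
  shows "gauss_curv X N p \<le> 0"
proof -
  have "Ldet X N \<sigma> p \<le> 0" if "\<sigma> < CARD('n) - 2" for \<sigma>
  proof -
    have "Lcoef X N \<sigma> 2 2 p = - Lcoef X N \<sigma> 1 1 p"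
      using assms that by (simp add: minimal_wrt_def eq_neg_iff_add_eq_0 add.commute)
    then show ?thesis by (simp add: Ldet_def power2_eq_square)
  qed
  then have "(\<Sum>\<sigma><CARD('n) - 2. Ldet X N \<sigma> p) \<le> 0" by (intro sum_nonpos) auto
  then show ?thesis unfolding gauss_curv_eq_sum_Ldet by (simp add: divide_nonpos_nonneg)
qed

lemma minimal_curvature_weight_nonneg:
  assumes "minimal_wrt X N" "C0inf \<phi>"
  shows "(- gauss_curv X N p) * Wf X p * (\<phi> p)\<^sup>2 \<ge> 0"
proof (cases "p \<in> ball 0 1")
  case True
  have "gauss_curv X N p * Wf X p \<le> 0"
    using minimal_gauss_curv_nonpos[OF assms(1) True] by (rule mult_nonpos_nonneg) (simp add: Wf_def)
  then have "gauss_curv X N p * Wf X p * (\<phi> p)\<^sup>2 \<le> 0" by (rule mult_nonpos_nonneg) simp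
  then show ?thesis by simp
next
  case False
  then have "\<phi> p = 0"
    using assms(2) closure_subset[of "{p. \<phi> p \<noteq> 0}"] by (auto simp: C0inf_def)
  then show ?thesis by simp
qed

lemma sum_second_variation_densities:
  fixes X :: "real^2 \<Rightarrow> real^'n"
  shows "(\<Sum>\<sigma><CARD('n) - 2. gradsq \<phi> p + 2 * (\<phi> p)\<^sup>2 * Ldet X N \<sigma> p / Wf X p)
    = real (CARD('n) - 2) * gradsq \<phi> p - 2 * ((- gauss_curv X N p) * Wf X p * (\<phi> p)\<^sup>2)"
proof -
  have "(\<Sum>\<sigma><CARD('n) - 2. gradsq \<phi> p + 2 * (\<phi> p)\<^sup>2 * Ldet X N \<sigma> p / Wf X p)
    = real (CARD('n) - 2) * gradsq \<phi> p + 2 * (\<phi> p)\<^sup>2 * (\<Sum>\<sigma><CARD('n) - 2. Ldet X N \<sigma> p) / Wf X p"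
    by (simp add: sum.distrib sum_divide_distrib[symmetric] sum_distrib_left[symmetric])
  then show ?thesis
    by (cases "Wf X p = 0") (simp_all add: gauss_curv_eq_sum_Ldet field_simps power2_eq_square)
qed

lemma integrable_gradsq:
  assumes "C0inf \<phi>"
  shows "gradsq \<phi> integrable_on Bdisc"
proof -
  have "continuous_on UNIV (pd \<phi> i)" for i
    using assms Ck_imp_continuous_on Ck_Suc_open_Ck_pd[OF open_UNIV, of 0 \<phi>]
    by (auto simp: C0inf_def)
  then show ?thesis
    unfolding gradsq_def[abs_def]
    by (intro integrable_on_compact_continuous continuous_intros)
      (auto simp: Bdisc_def intro: continuous_on_subset)
qed

section \<open>Second variation of area along a normal field\<close>

locale normal_variation = conformal_flat_normal_immersion X N
  for X :: "real^2 \<Rightarrow> real^'n" and N :: "nat \<Rightarrow> real^2 \<Rightarrow> real^'n" +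
  fixes \<phi> :: "real^2 \<Rightarrow> real" and \<sigma> :: nat
  assumes test_function: "C0inf \<phi>" and \<sigma>: "\<sigma> < CARD('n) - 2"
begin

definition supp where "supp = closure {p. \<phi> p \<noteq> 0}"

lemma compact_supp: "compact supp" and supp_subset_ball: "supp \<subseteq> ball 0 1"
  using test_function by (auto simp: C0inf_def supp_def)

lemma Ck1_phi: "Ck (Suc 0) UNIV \<phi>"
  using test_function by (auto simp: C0inf_def)

lemma has_pd_phi: "((\<lambda>t. \<phi> (p + t *\<^sub>R axis i 1)) has_real_derivative pd \<phi> i p) (at 0)"
  using Ck_Suc_open_has_pd[OF open_UNIV Ck1_phi]
  by (simp add: has_real_derivative_iff_has_vector_derivative)

lemma continuous_on_phi: "continuous_on UNIV \<phi>"
  by (rule Ck_imp_continuous_on[OF Ck1_phi])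

lemma continuous_on_pd_phi: "continuous_on UNIV (pd \<phi> i)"
  by (rule Ck_imp_continuous_on[OF Ck_Suc_open_Ck_pd[OF open_UNIV Ck1_phi]])

lemma phi_outside: "p \<notin> supp \<Longrightarrow> \<phi> p = 0"
  using closure_subset[of "{p. \<phi> p \<noteq> 0}"] by (auto simp: supp_def)

lemma pd_phi_outside:
  assumes "p \<notin> supp"
  shows "pd \<phi> i p = 0"
proof -
  have "pd \<phi> i p = pd (\<lambda>_. 0) i p"
    using compact_imp_closed[OF compact_supp] phi_outside assms by (intro pd_cong_open[of "- supp"]) auto
  also have "\<dots> = 0" by (rule pd_eqI) simp
  finally show ?thesis .
qed

definition pd_field :: "2 \<Rightarrow> real^2 \<Rightarrow> real^'n" where
  "pd_field i p = pd \<phi> i p *\<^sub>R N \<sigma> p + \<phi> p *\<^sub>R pd (N \<sigma>) i p"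

lemma pd_field_outside: "p \<notin> supp \<Longrightarrow> pd_field i p = 0"
  by (simp add: pd_field_def phi_outside pd_phi_outside)

lemma continuous_on_pd_field: "continuous_on (ball 0 1) (pd_field i)"
  unfolding pd_field_def
  by (intro continuous_intros continuous_on_subset[OF continuous_on_pd_phi]
      continuous_on_subset[OF continuous_on_phi] continuous_on_N[OF \<sigma>] continuous_on_pd_N[OF \<sigma>]) auto

lemma pd_variation: "pd (\<lambda>p. X p + (\<epsilon> * \<phi> p) *\<^sub>R N \<sigma> p) i p = pd X i p + \<epsilon> *\<^sub>R pd_field i p"
proof (cases "p \<in> ball 0 1")
  case True
  have "((\<lambda>t. X (p + t *\<^sub>R axis i 1) + (\<epsilon> * \<phi> (p + t *\<^sub>R axis i 1)) *\<^sub>R N \<sigma> (p + t *\<^sub>R axis i 1))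
     has_vector_derivative pd X i p + ((\<epsilon> * \<phi> (p + 0 *\<^sub>R axis i 1)) *\<^sub>R pd (N \<sigma>) i p
        + (\<epsilon> * pd \<phi> i p) *\<^sub>R N \<sigma> (p + 0 *\<^sub>R axis i 1))) (at 0)"
    by (intro has_vector_derivative_add has_pd_X[OF True] has_vector_derivative_scaleR DERIV_cmult
        has_pd_phi has_pd_N[OF \<sigma> True])
  then show ?thesis by (simp add: pd_eqI pd_field_def scaleR_add_right)
next
  case False
  then have "p \<notin> supp" using supp_subset_ball by auto
  then have "pd (\<lambda>p. X p + (\<epsilon> * \<phi> p) *\<^sub>R N \<sigma> p) i p = pd X i p"
    using compact_imp_closed[OF compact_supp] phi_outside by (intro pd_cong_open[of "- supp"]) auto
  then show ?thesis using pd_field_outside[OF \<open>p \<notin> supp\<close>] by simp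
qed

lemma area_variation:
  "area (\<lambda>p. X p + (\<epsilon> * \<phi> p) *\<^sub>R N \<sigma> p)
    = integral Bdisc (\<lambda>p. sqrt (gram (pd X 1 p + \<epsilon> *\<^sub>R pd_field 1 p) (pd X 2 p + \<epsilon> *\<^sub>R pd_field 2 p)))"
  unfolding area_def pd_variation gram_def ..

lemma inner_pd_X_pd_field:
  assumes "p \<in> ball 0 1"
  shows "pd X j p \<bullet> pd_field i p = - \<phi> p * Lcoef X N \<sigma> i j p"
  using pd_X_inner_N[OF assms \<sigma>] pd_X_inner_pd_N[OF assms \<sigma>] by (simp add: pd_field_def inner_add_right)

lemma inner_pd_field_pd_field:
  assumes "p \<in> ball 0 1"
  shows "pd_field i p \<bullet> pd_field i p
    = (pd \<phi> i p)\<^sup>2 + (\<phi> p)\<^sup>2 * ((Lcoef X N \<sigma> i 1 p)\<^sup>2 + (Lcoef X N \<sigma> i 2 p)\<^sup>2) / Wf X p"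
proof -
  have "N \<sigma> p \<bullet> pd (N \<sigma>) i p = 0" "pd (N \<sigma>) i p \<bullet> N \<sigma> p = 0"
    using N_inner_pd_N[OF assms \<sigma>] by (auto simp: inner_commute)
  then show ?thesis
    using N_inner_N[OF assms \<sigma> \<sigma>] inner_pd_N_pd_N[OF assms \<sigma>]
    by (simp add: pd_field_def inner_add_right inner_add_left power2_eq_square)
qed

lemma second_variation_density:
  "gram_deriv2 (pd X 1 p) (pd X 2 p) (pd_field 1 p) (pd_field 2 p)
      / (2 * sqrt (gram (pd X 1 p) (pd X 2 p)))
    - (gram_deriv (pd X 1 p) (pd X 2 p) (pd_field 1 p) (pd_field 2 p))\<^sup>2
      / (4 * gram (pd X 1 p) (pd X 2 p) * sqrt (gram (pd X 1 p) (pd X 2 p)))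
   = gradsq \<phi> p + 2 * (\<phi> p)\<^sup>2 * Ldet X N \<sigma> p / Wf X p"
proof (cases "p \<in> ball 0 1")
  case False
  then have "p \<notin> supp" using supp_subset_ball by auto
  then show ?thesis
    by (simp add: pd_field_outside phi_outside pd_phi_outside gradsq_def gram_deriv_def gram_deriv2_def)
next
  case True
  define W where "W = Wf X p"
  define L11 L12 L22 where "L11 = Lcoef X N \<sigma> 1 1 p" and "L12 = Lcoef X N \<sigma> 1 2 p"
    and "L22 = Lcoef X N \<sigma> 2 2 p"
  have W: "pd X 1 p \<bullet> pd X 1 p = W" "pd X 2 p \<bullet> pd X 2 p = W" "pd X 1 p \<bullet> pd X 2 p = 0" "W > 0"
    using conformal_pd_X[OF True] by (simp_all add: W_def Wf_def)
  have L21: "Lcoef X N \<sigma> 2 1 p = L12" using Lcoef_sym[OF True] by (simp add: L12_def)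
  have "gram_deriv2 (pd X 1 p) (pd X 2 p) (pd_field 1 p) (pd_field 2 p)
      / (2 * sqrt (gram (pd X 1 p) (pd X 2 p)))
    - (gram_deriv (pd X 1 p) (pd X 2 p) (pd_field 1 p) (pd_field 2 p))\<^sup>2
      / (4 * gram (pd X 1 p) (pd X 2 p) * sqrt (gram (pd X 1 p) (pd X 2 p)))
    = pd_field 1 p \<bullet> pd_field 1 p + pd_field 2 p \<bullet> pd_field 2 p
      - ((pd X 1 p \<bullet> pd_field 1 p - pd X 2 p \<bullet> pd_field 2 p)\<^sup>2
        + (pd X 1 p \<bullet> pd_field 2 p + pd_field 1 p \<bullet> pd X 2 p)\<^sup>2) / W"
    by (rule sqrt_gram_second_derivative_conformal[OF W])
  also have "\<dots> = (pd \<phi> 1 p)\<^sup>2 + (\<phi> p)\<^sup>2 * (L11\<^sup>2 + L12\<^sup>2) / W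
      + ((pd \<phi> 2 p)\<^sup>2 + (\<phi> p)\<^sup>2 * (L12\<^sup>2 + L22\<^sup>2) / W)
      - ((- \<phi> p * L11 - - \<phi> p * L22)\<^sup>2 + (- 2 * \<phi> p * L12)\<^sup>2) / W"
    using inner_pd_X_pd_field[OF True] inner_pd_field_pd_field[OF True]
    by (simp add: inner_commute[of "pd_field 1 p"] L21 W_def L11_def L22_def L12_def power_mult_distrib)
  also have "\<dots> = gradsq \<phi> p + 2 * (\<phi> p)\<^sup>2 * (L11 * L22 - L12\<^sup>2) / W"
    using \<open>W > 0\<close> by (simp add: gradsq_def field_simps power2_eq_square)
  finally show ?thesis by (simp add: Ldet_def W_def L11_def L12_def L22_def)
qed

lemma second_derivative_area_variation:
  defines "Q \<equiv> \<lambda>p. gram_deriv2 (pd X 1 p) (pd X 2 p) (pd_field 1 p) (pd_field 2 p)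
      / (2 * sqrt (gram (pd X 1 p) (pd X 2 p)))
    - (gram_deriv (pd X 1 p) (pd X 2 p) (pd_field 1 p) (pd_field 2 p))\<^sup>2
      / (4 * gram (pd X 1 p) (pd X 2 p) * sqrt (gram (pd X 1 p) (pd X 2 p)))"
  shows "deriv (deriv (\<lambda>\<epsilon>. area (\<lambda>p. X p + (\<epsilon> * \<phi> p) *\<^sub>R N \<sigma> p))) 0 = integral Bdisc Q"
    and "Q integrable_on Bdisc"
proof -
  define A where "A e p = pd X 1 p + e *\<^sub>R pd_field 1 p" for e p
  define B where "B e p = pd X 2 p + e *\<^sub>R pd_field 2 p" for e p
  have cont_snd: "continuous_on (UNIV \<times> ball 0 1) (\<lambda>x. g (snd x))"
    if "continuous_on (ball 0 1) g" for g :: "real^2 \<Rightarrow> real^'n"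
    by (rule continuous_on_compose2[OF that continuous_on_snd]) auto
  note cont = cont_snd[OF continuous_on_pd_X] cont_snd[OF continuous_on_pd_field]
  have supp_Bdisc: "supp \<subseteq> Bdisc" using supp_subset_ball ball_subset_Bdisc by blast
  have dP: "((\<lambda>e. gram (A e p) (B e p)) has_real_derivative
      gram_deriv (A e p) (B e p) (pd_field 1 p) (pd_field 2 p)) (at e)"
    for e p unfolding A_def B_def by (rule has_real_derivative_gram_line)
  have dP': "((\<lambda>e. gram_deriv (A e p) (B e p) (pd_field 1 p) (pd_field 2 p)) has_real_derivative
      gram_deriv2 (A e p) (B e p) (pd_field 1 p) (pd_field 2 p)) (at e)"
    for e p unfolding A_def B_def by (rule has_real_derivative_gram_deriv_line)
  have cP: "continuous_on (UNIV \<times> ball 0 1) (\<lambda>x. gram (A (fst x) (snd x)) (B (fst x) (snd x)))"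
    unfolding A_def B_def gram_def by (intro continuous_intros cont)
  have cP': "continuous_on (UNIV \<times> ball 0 1)
      (\<lambda>x. gram_deriv (A (fst x) (snd x)) (B (fst x) (snd x))
        (pd_field 1 (snd x)) (pd_field 2 (snd x)))"
    unfolding A_def B_def gram_deriv_def by (intro continuous_intros cont)
  have cP'': "continuous_on (UNIV \<times> ball 0 1)
      (\<lambda>x. gram_deriv2 (A (fst x) (snd x)) (B (fst x) (snd x))
        (pd_field 1 (snd x)) (pd_field 2 (snd x)))"
    unfolding A_def B_def gram_deriv2_def by (intro continuous_intros cont)
  have out: "gram (A e p) (B e p) = gram (A 0 p) (B 0 p)
      \<and> gram_deriv (A e p) (B e p) (pd_field 1 p) (pd_field 2 p) = 0
      \<and> gram_deriv2 (A e p) (B e p) (pd_field 1 p) (pd_field 2 p) = 0"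
    if "p \<notin> supp" for e p
    by (simp add: A_def B_def pd_field_outside[OF that] gram_deriv_def gram_deriv2_def)
  have pos: "gram (A 0 p) (B 0 p) > 0" if "p \<in> ball 0 1" for p
    using conformal_pd_X[OF that] by (simp add: A_def B_def gram_conformal Wf_def)
  have int0: "(\<lambda>p. sqrt (gram (A 0 p) (B 0 p))) integrable_on Bdisc"
    using integrable_area_density by (simp add: A_def B_def)
  note D = deriv2_integral_sqrt[OF open_ball compact_supp supp_subset_ball supp_Bdisc compact_Bdisc
      dP dP' cP cP' cP'' out pos int0]
  have "(\<lambda>\<epsilon>. area (\<lambda>p. X p + (\<epsilon> * \<phi> p) *\<^sub>R N \<sigma> p))
      = (\<lambda>e. integral Bdisc (\<lambda>p. sqrt (gram (A e p) (B e p))))"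
    by (simp add: area_variation A_def B_def)
  then show "deriv (deriv (\<lambda>\<epsilon>. area (\<lambda>p. X p + (\<epsilon> * \<phi> p) *\<^sub>R N \<sigma> p))) 0 = integral Bdisc Q"
    and "Q integrable_on Bdisc"
    using D by (simp_all add: Q_def A_def B_def)
qed

lemma second_variation:
  "deriv (deriv (\<lambda>\<epsilon>. area (\<lambda>p. X p + (\<epsilon> * \<phi> p) *\<^sub>R N \<sigma> p))) 0
    = integral Bdisc (\<lambda>p. gradsq \<phi> p + 2 * (\<phi> p)\<^sup>2 * Ldet X N \<sigma> p / Wf X p)"
  "(\<lambda>p. gradsq \<phi> p + 2 * (\<phi> p)\<^sup>2 * Ldet X N \<sigma> p / Wf X p) integrable_on Bdisc"
  using second_derivative_area_variation by (simp_all add: second_variation_density)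

end

section \<open>The stability inequality\<close>

context conformal_flat_normal_immersion
begin

lemma normal_variationI: "C0inf \<phi> \<Longrightarrow> \<sigma> < CARD('n) - 2 \<Longrightarrow> normal_variation X N \<phi> \<sigma>"
  by (simp add: normal_variation_def normal_variation_axioms_def conformal_flat_normal_immersion_axioms)

lemma stable_second_variation_nonneg:
  assumes "stable X" "C0inf \<phi>" "\<sigma> < CARD('n) - 2"
  shows "deriv (deriv (\<lambda>\<epsilon>. area (\<lambda>p. X p + (\<epsilon> * \<phi> p) *\<^sub>R N \<sigma> p))) 0 \<ge> 0"
proof -
  have "Ck 2 Bdisc (N \<sigma>)" "\<forall>p\<in>Bdisc. N \<sigma> p \<bullet> N \<sigma> p = 1 \<and> (\<forall>i. pdB Bdisc X i p \<bullet> N \<sigma> p = 0)"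
    using normal_section assms(3) by (simp_all add: ON_normal_section_def)
  then show ?thesis using assms(1,2) unfolding stable_def by blast
qed

lemma sum_second_variations:
  assumes \<phi>: "C0inf \<phi>"
  defines "T \<equiv> \<lambda>p. (- gauss_curv X N p) * Wf X p * (\<phi> p)\<^sup>2"
  shows "(\<Sum>\<sigma><CARD('n) - 2. deriv (deriv (\<lambda>\<epsilon>. area (\<lambda>p. X p + (\<epsilon> * \<phi> p) *\<^sub>R N \<sigma> p))) 0)
      = real (CARD('n) - 2) * integral Bdisc (gradsq \<phi>) - 2 * integral Bdisc T"
    and "T integrable_on Bdisc"
proof -
  define m where "m = CARD('n) - 2"
  define R where "R \<sigma> p = gradsq \<phi> p + 2 * (\<phi> p)\<^sup>2 * Ldet X N \<sigma> p / Wf X p" for \<sigma> p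
  note sv = normal_variation.second_variation[OF normal_variationI[OF \<phi>], folded m_def R_def]
  have sumR: "(\<Sum>\<sigma><m. R \<sigma> p) = real m * gradsq \<phi> p - 2 * T p" for p
    unfolding R_def T_def m_def by (rule sum_second_variation_densities)
  have intR: "(\<lambda>p. \<Sum>\<sigma><m. R \<sigma> p) integrable_on Bdisc"
    using sv(2) by (intro integrable_sum) auto
  note intG = integrable_gradsq[OF \<phi>]
  have "T = (\<lambda>p. (1/2) * (real m * gradsq \<phi> p - (\<Sum>\<sigma><m. R \<sigma> p)))"
    using sumR by (auto simp: fun_eq_iff)
  then show intT: "T integrable_on Bdisc"
    using integrable_on_cmult_left[OF
        integrable_diff[OF integrable_on_cmult_left[OF intG, of "real m"] intR], of "1/2"]
    by simp
  have "(\<Sum>\<sigma><m. deriv (deriv (\<lambda>\<epsilon>. area (\<lambda>p. X p + (\<epsilon> * \<phi> p) *\<^sub>R N \<sigma> p))) 0)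
      = (\<Sum>\<sigma><m. integral Bdisc (R \<sigma>))"
    using sv(1) by simp
  also have "\<dots> = integral Bdisc (\<lambda>p. \<Sum>\<sigma><m. R \<sigma> p)"
    by (rule integral_sum[symmetric]) (use sv(2) in auto)
  also have "\<dots> = integral Bdisc (\<lambda>p. real m * gradsq \<phi> p - 2 * T p)"
    by (simp only: sumR)
  also have "\<dots> = integral Bdisc (\<lambda>p. real m * gradsq \<phi> p) - integral Bdisc (\<lambda>p. 2 * T p)"
    by (rule integral_diff)
      (use integrable_on_cmult_left[OF intG] integrable_on_cmult_left[OF intT] in auto)
  also have "\<dots> = real m * integral Bdisc (gradsq \<phi>) - 2 * integral Bdisc T"
    by (simp add: integral_mult_right)
  finally show "(\<Sum>\<sigma><CARD('n) - 2. deriv (deriv (\<lambda>\<epsilon>. area (\<lambda>p. X p + (\<epsilon> * \<phi> p) *\<^sub>R N \<sigma> p))) 0)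
      = real (CARD('n) - 2) * integral Bdisc (gradsq \<phi>) - 2 * integral Bdisc T"
    by (simp add: m_def)
qed

end

theorem mainTheorem4:
  fixes X :: "real^2 \<Rightarrow> real^'n"
    and N :: "nat \<Rightarrow> real^2 \<Rightarrow> real^'n"
  assumes "CARD('n) \<ge> 3"
    and "Ck 3 Bdisc X"
    and "conformal_immersion X"
    and "ON_normal_section X N"
    and "torsion_free N"
    and "minimal_wrt X N"
    and "stable X"
  shows "\<forall>\<mu>::real. 0 < \<mu> \<and> \<mu> \<le> 2 / (real CARD('n) - 2) \<longrightarrow>
           (\<forall>\<phi>. C0inf \<phi> \<longrightarrow>
              integral Bdisc (gradsq \<phi>)
                \<ge> \<mu> * integral Bdisc (\<lambda>p. (- gauss_curv X N p) * Wf X p * (\<phi> p)\<^sup>2))"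
proof (intro allI impI)
  fix \<mu> :: real and \<phi> :: "real^2 \<Rightarrow> real"
  assume \<mu>: "0 < \<mu> \<and> \<mu> \<le> 2 / (real CARD('n) - 2)" and \<phi>: "C0inf \<phi>"
  interpret conformal_flat_normal_immersion X N
    using assms by unfold_locales
  define T where "T p = (- gauss_curv X N p) * Wf X p * (\<phi> p)\<^sup>2" for p
  have m: "real (CARD('n) - 2) = real CARD('n) - 2" "real CARD('n) - 2 > 0"
    using assms(1) by (simp_all add: of_nat_diff)
  have "0 \<le> (\<Sum>\<sigma><CARD('n) - 2. deriv (deriv (\<lambda>\<epsilon>. area (\<lambda>p. X p + (\<epsilon> * \<phi> p) *\<^sub>R N \<sigma> p))) 0)"
    using stable_second_variation_nonneg[OF assms(7) \<phi>] by (intro sum_nonneg) auto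
  then have summed: "2 * integral Bdisc T \<le> (real CARD('n) - 2) * integral Bdisc (gradsq \<phi>)"
    using sum_second_variations[OF \<phi>] m(1) unfolding T_def[abs_def] by simp
  have "integral Bdisc T \<ge> 0"
    using sum_second_variations(2)[OF \<phi>] minimal_curvature_weight_nonneg[OF assms(6) \<phi>]
    unfolding T_def[abs_def] by (intro integral_nonneg) auto
  then have "\<mu> * integral Bdisc T \<le> 2 / (real CARD('n) - 2) * integral Bdisc T"
    using \<mu> by (intro mult_right_mono) auto
  also have "\<dots> \<le> integral Bdisc (gradsq \<phi>)"
    using summed m(2) by (simp add: pos_divide_le_eq mult.commute)
  finally show "integral Bdisc (gradsq \<phi>)
      \<ge> \<mu> * integral Bdisc (\<lambda>p. (- gauss_curv X N p) * Wf X p * (\<phi> p)\<^sup>2)"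
    unfolding T_def .
qed

end
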